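(* For $t\in[0,1]$ let $f_t\in\mathrm{Bir}(\mathbb{P}^2_{\mathbb{C}})$ be $f_t\colon[x_0:x_1:x_2]\dashrightarrow[x_0^2:x_0x_1:x_0x_2+t(1-t)x_1^2]$. Let $\sigma\colon[-1,1]\to\mathrm{PSU}(3)$ be a continuous surjective map, regard $\mathrm{PSU}(3)\subset\mathrm{PGL}_3(\mathbb{C})=\mathrm{Aut}(\mathbb{P}^2_{\mathbb{C}})\subset\mathrm{Bir}(\mathbb{P}^2_{\mathbb{C}})$, let $\hat\sigma\colon(0,1]\to\mathrm{PSU}(3)$, $\hat\sigma(t)=\sigma(\sin(1))^{-1}\sigma(\sin(1/t))$, and $\rho\colon(0,1]\to\mathrm{Bir}(\mathbb{P}^2_{\mathbb{C}})$, $\rho(t)=\hat\sigma(t)\circ f_t\circ\hat\sigma(t)^{-1}$. Then $\rho$ extends to a continuous map $\hat\rho\colon[0,1]\to\mathrm{Bir}(\mathbb{P}^2_{\mathbb{C}})$ with $\hat\rho(0)=\mathrm{id}$. Moreover, the map $H\colon[0,1]\times[0,1]\to\mathrm{Bir}(\mathbb{P}^2_{\mathbb{C}})$ given by $H(s,t)=\hat\rho(t)$ for $t\geq s$ and $H(s,t)=\hat\sigma(s)\circ f_t\circ\hat\sigma(s)^{-1}$ for $t<s$ is continuous; in particular $\hat\rho$ is homotopic to the map $t\mapsto f_t$.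
   Context: All topologies on $\mathrm{Bir}(\mathbb{P}^2_{\mathbb{C}})$ are the Euclidean topology: for $d\geq1$, $W_d(\mathbb{C})$ is the projective space of classes of non-zero triples of degree-$d$ homogeneous polynomials in $\mathbb{C}[x_0,x_1,x_2]$ modulo scalars with its Euclidean topology; $H_d(\mathbb{C})\subset W_d(\mathbb{C})$ the subset defining birational maps; the set $\mathrm{Bir}(\mathbb{P}^2_{\mathbb{C}})_{\leq d}$ of maps of degree $\leq d$ gets the quotient topology via the natural surjection $H_d(\mathbb{C})\to\mathrm{Bir}(\mathbb{P}^2_{\mathbb{C}})_{\leq d}$, and $\mathrm{Bir}(\mathbb{P}^2_{\mathbb{C}})$ the inductive limit topology. *)

theory Defs
  imports "HOL-Analysis.Analysis"
begin

text \<open>A monomial x0^a0 x1^a1 x2^a2 is given by its exponent function on the index type 3.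
  A triple (F0,F1,F2) of polynomials is given by its coefficient function:
  F (i, a) is the coefficient of the monomial a in the component F_i.\<close>

type_synonym mono = "3 \<Rightarrow> nat"
type_synonym triple = "3 \<times> mono \<Rightarrow> complex"

definition mdeg :: "mono \<Rightarrow> nat" where
  "mdeg a = (\<Sum>j\<in>UNIV. a j)"

definition mon :: "mono \<Rightarrow> complex^3 \<Rightarrow> complex" where
  "mon a x = (\<Prod>j\<in>UNIV. (x $ j) ^ a j)"

definition is_triple :: "nat \<Rightarrow> triple \<Rightarrow> bool" where
  "is_triple d F \<longleftrightarrow> (\<exists>k. F k \<noteq> 0) \<and> (\<forall>i a. F (i, a) \<noteq> 0 \<longrightarrow> mdeg a = d)"

definition ev :: "triple \<Rightarrow> complex^3 \<Rightarrow> complex^3" where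
  "ev F x = (\<chi> i. \<Sum>a\<in>{a. F (i, a) \<noteq> 0}. F (i, a) * mon a x)"

definition par :: "complex^3 \<Rightarrow> complex^3 \<Rightarrow> bool" where
  "par u v \<longleftrightarrow> (\<forall>i j. u $ i * v $ j = u $ j * v $ i)"

text \<open>G is a (rational) right inverse of F: F o G is defined and equals the identity.\<close>
definition inv_pair :: "triple \<Rightarrow> triple \<Rightarrow> bool" where
  "inv_pair F G \<longleftrightarrow> (\<exists>x. ev F (ev G x) \<noteq> 0) \<and> (\<forall>x. par (ev F (ev G x)) x)"

definition birational :: "triple \<Rightarrow> bool" where
  "birational F \<longleftrightarrow> (\<exists>d. is_triple d F) \<and>
     (\<exists>e G. is_triple e G \<and> inv_pair F G \<and> inv_pair G F)"

text \<open>The rational map defined by F, represented as the set of all triples (of any degree)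
  defining the same rational map.\<close>
definition bir_of :: "triple \<Rightarrow> triple set" where
  "bir_of F = {G. (\<exists>e. is_triple e G) \<and> (\<forall>x. par (ev F x) (ev G x))}"

definition quot_top :: "'a topology \<Rightarrow> ('a \<Rightarrow> 'b) \<Rightarrow> 'b topology" where
  "quot_top X f = topology (\<lambda>U. U \<subseteq> f ` topspace X \<and> openin X {x \<in> topspace X. f x \<in> U})"

definition triples :: "nat \<Rightarrow> triple set" where
  "triples d = {F. is_triple d F}"

definition proj_cls :: "triple \<Rightarrow> triple set" where
  "proj_cls F = {G. \<exists>c. c \<noteq> 0 \<and> G = (\<lambda>k. c * F k)}"

definition W :: "nat \<Rightarrow> triple set set" where
  "W d = proj_cls ` triples d"

text \<open>Euclidean topology of the projective space W_d: quotient of the (Euclidean) space of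
  non-zero coefficient triples by scalars.\<close>
definition W_top :: "nat \<Rightarrow> triple set topology" where
  "W_top d = quot_top (top_of_set (triples d)) proj_cls"

definition H :: "nat \<Rightarrow> triple set set" where
  "H d = {P \<in> W d. \<forall>F\<in>P. birational F}"

definition H_top :: "nat \<Rightarrow> triple set topology" where
  "H_top d = subtopology (W_top d) (H d)"

definition bir_of_cls :: "triple set \<Rightarrow> triple set" where
  "bir_of_cls P = bir_of (SOME F. F \<in> P)"

definition Bir_le :: "nat \<Rightarrow> triple set set" where
  "Bir_le d = bir_of_cls ` H d"

definition Bir_le_top :: "nat \<Rightarrow> triple set topology" where
  "Bir_le_top d = quot_top (H_top d) bir_of_cls"

definition Bir :: "triple set set" where
  "Bir = (\<Union>d\<in>{1..}. Bir_le d)"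

definition bir_top :: "triple set topology" where
  "bir_top = topology (\<lambda>U. U \<subseteq> Bir \<and> (\<forall>d\<ge>1. openin (Bir_le_top d) (U \<inter> Bir_le d)))"

definition bir_comp :: "triple set \<Rightarrow> triple set \<Rightarrow> triple set" where
  "bir_comp \<phi> \<psi> = (THE C. C \<in> Bir \<and>
     (\<forall>F\<in>\<phi>. \<forall>G\<in>\<psi>. \<forall>K\<in>C. \<forall>x. par (ev K x) (ev F (ev G x))))"

definition lin_triple :: "complex^3^3 \<Rightarrow> triple" where
  "lin_triple A = (\<lambda>(i, a). \<Sum>j\<in>UNIV. if a = (\<lambda>k. if k = j then 1 else 0) then A $ i $ j else 0)"

definition bir_id :: "triple set" where
  "bir_id = bir_of (lin_triple (mat 1))"

definition bir_inv :: "triple set \<Rightarrow> triple set" where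
  "bir_inv \<phi> = (THE \<psi>. \<psi> \<in> Bir \<and> bir_comp \<phi> \<psi> = bir_id)"

definition cstar :: "complex^3^3 \<Rightarrow> complex^3^3" where
  "cstar A = (\<chi> i j. cnj (A $ j $ i))"

definition PSU3 :: "triple set set" where
  "PSU3 = {bir_of (lin_triple A) | A. A ** cstar A = mat 1 \<and> det A = 1}"

definition ex3 :: "nat \<Rightarrow> nat \<Rightarrow> nat \<Rightarrow> mono" where
  "ex3 a b c = (\<lambda>k. if k = 0 then a else if k = 1 then b else c)"

definition ftr :: "real \<Rightarrow> triple" where
  "ftr t = (\<lambda>(i, a).
     if i = 0 \<and> a = ex3 2 0 0 then 1
     else if i = 1 \<and> a = ex3 1 1 0 then 1
     else if i = 2 \<and> a = ex3 1 0 1 then 1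
     else if i = 2 \<and> a = ex3 0 2 0 then complex_of_real (t * (1 - t))
     else 0)"

definition f :: "real \<Rightarrow> triple set" where
  "f t = bir_of (ftr t)"

end

theory Submission
  imports Defs
begin

text \<open>Conjugating \<open>f\<^sub>t\<close> by a unitary matrix \<open>X\<close> gives the quadratic map \<open>X \<circ> f\<^sub>t \<circ> X\<^sup>*\<close>,
  whose coefficients depend continuously on \<open>(t(1 - t), X)\<close> and which is the identity for every
  \<open>X\<close> when \<open>t(1 - t) = 0\<close>. The map \<open>H(s, t) = \<sigma>h(m) \<circ> f\<^sub>t \<circ> \<sigma>h(m)\<^sup>-\<^sup>1\<close>, \<open>m = max s t\<close>,
  is therefore continuous at the origin by compactness of \<open>U(3)\<close> (tube lemma). Away from the
  origin, \<open>\<sigma>\<close> lifts locally to unitary matrices up to unit scalars, because the image of a compact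
  set of unitary matrices is closed in \<open>Bir(P\<^sup>2)\<close>. Since \<open>\<sigma>h(1) = id\<close>, \<open>H\<close> itself is the homotopy
  from \<open>\<rho>h = H(0, -)\<close> to \<open>f = H(1, -)\<close>.\<close>

lemma continuous_map_extend_at_point:
  assumes cont: "continuous_map (subtopology X (topspace X - {a})) Y g"
    and open_punctured: "openin X (topspace X - {a})"
    and a: "g a \<in> topspace Y"
    and at_a: "\<And>U. openin Y U \<Longrightarrow> g a \<in> U \<Longrightarrow> \<exists>V. openin X V \<and> a \<in> V \<and> (\<forall>x\<in>V. g x \<in> U)"
  shows "continuous_map X Y g"
  unfolding continuous_map
proof (intro conjI allI impI)
  show "g ` topspace X \<subseteq> topspace Y"
    using continuous_map_image_subset_topspace[OF cont] a by auto
  fix U assume U: "openin Y U"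
  show "openin X {x \<in> topspace X. g x \<in> U}"
  proof (subst openin_subopen, intro ballI)
    fix x assume x: "x \<in> {x \<in> topspace X. g x \<in> U}"
    show "\<exists>V. openin X V \<and> x \<in> V \<and> V \<subseteq> {x \<in> topspace X. g x \<in> U}"
    proof (cases "x = a")
      case True
      then show ?thesis using at_a[OF U] x by (auto dest: openin_subset)
    next
      case False
      have "openin (subtopology X (topspace X - {a})) {x \<in> topspace X - {a}. g x \<in> U}"
        using openin_continuous_map_preimage[OF cont U] by simp
      then have "openin X {x \<in> topspace X - {a}. g x \<in> U}"
        using open_punctured openin_trans_full by blast
      then show ?thesis using x False by (intro exI[of _ "{x \<in> topspace X - {a}. g x \<in> U}"]) auto
    qed
  qed
qed

lemma homotopic_with_square:
  fixes F :: "real \<times> real \<Rightarrow> 'a"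
  assumes F: "continuous_map (top_of_set ({0..1} \<times> {0..1})) Y F"
    and "\<And>t. t \<in> {0..1} \<Longrightarrow> F (0, t) = g t" "\<And>t. t \<in> {0..1} \<Longrightarrow> F (1, t) = h t"
  shows "homotopic_with (\<lambda>_. True) (top_of_set {0..1}) Y g h"
  unfolding homotopic_with_def
proof (intro exI conjI allI ballI)
  let ?h = "\<lambda>q::real \<times> real. if fst q = 0 then g (snd q) else if fst q = 1 then h (snd q) else F q"
  show "continuous_map (prod_topology (top_of_set {0..1}) (top_of_set {0..1})) Y ?h"
    unfolding prod_topology_subtopology_eu by (rule continuous_map_eq[OF F]) (auto simp: assms)
qed simp_all

lemma norm_vec_le_sum: "norm (x::'a::real_normed_vector^'n) \<le> (\<Sum>i\<in>UNIV. norm (x$i))"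
  by (simp add: norm_vec_def L2_set_le_sum)

lemma dense_Int_open:
  assumes "open A" "closure A = UNIV" "closure B = UNIV"
  shows "closure (A \<inter> B) = UNIV"
proof -
  have "A \<subseteq> closure (A \<inter> B)" using open_Int_closure_subset[OF assms(1), of B] assms(3) by simp
  then have "closure A \<subseteq> closure (A \<inter> B)" by (simp add: closure_minimal)
  then show ?thesis using assms(2) by auto
qed

lemma num3_cases: "(i::3) = 0 \<or> i = 1 \<or> i = 2"
  using exhaust_3[of i] by auto

lemma UNIV_num3: "(UNIV::3 set) = {0,1,2}"
  using num3_cases by auto

lemma sum_UNIV_num3: "sum g (UNIV::3 set) = g 0 + g 1 + g 2"
  unfolding UNIV_num3 by (simp add: add.assoc)

lemma prod_UNIV_num3: "prod g (UNIV::3 set) = g 0 * g 1 * g 2"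
  unfolding UNIV_num3 by (simp add: mult.assoc)

lemma vec_num3_eqI: "(u::'a^3)$0 = v$0 \<Longrightarrow> u$1 = v$1 \<Longrightarrow> u$2 = v$2 \<Longrightarrow> u = v"
  unfolding vec_eq_iff using num3_cases by metis

lemma mono_eq_iff: "(a::mono) = b \<longleftrightarrow> a 0 = b 0 \<and> a 1 = b 1 \<and> a 2 = b 2"
  using num3_cases by (metis ext)

lemma mon_num3: "mon a x = x$0^(a 0) * x$1^(a 1) * x$2^(a 2)"
  by (simp add: mon_def prod_UNIV_num3)

definition monos_deg :: "nat \<Rightarrow> mono set" where
  "monos_deg d = {a. mdeg a = d}"

lemma finite_monos_deg: "finite (monos_deg d)"
proof -
  have "monos_deg d \<subseteq> Pi UNIV (\<lambda>_. {..d})"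
    unfolding monos_deg_def mdeg_def by (auto intro: member_le_sum)
  moreover have "finite (Pi UNIV (\<lambda>_::3. {..d}))"
    using finite_PiE[of UNIV "\<lambda>_::3. {..d}"] by (simp add: PiE_UNIV_domain)
  ultimately show ?thesis by (rule finite_subset)
qed

lemma coeff_support_subset: "is_triple d F \<Longrightarrow> {a. F (i,a) \<noteq> 0} \<subseteq> monos_deg d"
  by (auto simp: is_triple_def monos_deg_def)

lemma ev_nth_eq_sum_superset:
  assumes "finite S" "\<And>a. F (i,a) \<noteq> 0 \<Longrightarrow> a \<in> S"
  shows "ev F x $ i = (\<Sum>a\<in>S. F (i,a) * mon a x)"
  unfolding ev_def using assms by (auto intro!: sum.mono_neutral_left)

lemma ev_nth_eq_sum_monos_deg:
  "is_triple d F \<Longrightarrow> ev F x $ i = (\<Sum>a\<in>monos_deg d. F (i,a) * mon a x)"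
  by (rule ev_nth_eq_sum_superset) (use finite_monos_deg coeff_support_subset[of d F i] in auto)

lemma ev_nonzero_imp_coeff_nonzero: "ev K x \<noteq> 0 \<Longrightarrow> \<exists>k. K k \<noteq> 0"
  by (rule ccontr) (simp add: ev_def vec_eq_iff)

lemma mon_smult: "mon a (c *s x) = c ^ mdeg a * mon a x"
  by (simp add: mon_def mdeg_def power_mult_distrib prod.distrib power_sum)

lemma ev_homogeneous: "is_triple d F \<Longrightarrow> ev F (c *s x) = c ^ d *s ev F x"
  by (simp add: vec_eq_iff ev_nth_eq_sum_monos_deg mon_smult sum_distrib_left monos_deg_def
      mult.left_commute)

lemma ev_zero: "is_triple d F \<Longrightarrow> d \<ge> 1 \<Longrightarrow> ev F 0 = 0"
  using ev_homogeneous[of d F 0 0] by (simp add: power_0_left)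

text \<open>Unlike \<open>ev K\<close>, whose range of summation depends on the support of \<open>K\<close>, this is continuous
  in the coefficients of \<open>K\<close> as well.\<close>

definition ev_deg :: "nat \<Rightarrow> triple \<Rightarrow> complex^3 \<Rightarrow> complex^3" where
  "ev_deg d K x = (\<chi> i. \<Sum>a\<in>monos_deg d. K (i,a) * mon a x)"

lemma ev_deg_eq_ev: "is_triple d K \<Longrightarrow> ev_deg d K x = ev K x"
  by (simp add: ev_deg_def vec_eq_iff ev_nth_eq_sum_monos_deg)

lemma continuous_on_ev: "is_triple d F \<Longrightarrow> continuous_on UNIV (ev F)"
proof -
  assume F: "is_triple d F"
  have "continuous_on UNIV (ev_deg d F)"
    unfolding ev_deg_def mon_def by (intro continuous_intros)
  moreover have "ev_deg d F = ev F" using ev_deg_eq_ev[OF F] by (simp add: fun_eq_iff)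
  ultimately show ?thesis by simp
qed

section \<open>A non-zero triple does not vanish on any open set\<close>

lemma poly_coeff_zero_if_vanishing:
  fixes b :: "nat \<Rightarrow> complex"
  assumes "infinite Z" "\<forall>z\<in>Z. (\<Sum>i\<le>N. b i * z^i) = 0" "i \<le> N"
  shows "b i = 0"
proof (rule ccontr)
  assume "b i \<noteq> 0"
  then have "finite {z. (\<Sum>i\<le>N. b i * z^i) = 0}"
    using polyfun_roots_finite[of b i N] assms(3) by blast
  moreover have "Z \<subseteq> {z. (\<Sum>i\<le>N. b i * z^i) = 0}" using assms(2) by auto
  ultimately show False using assms(1) finite_subset by blast
qed

lemma coeff_sum_zero_if_vanishing:
  fixes h :: "'a \<Rightarrow> complex"
  assumes "finite S" "infinite Z" "\<forall>z\<in>Z. (\<Sum>a\<in>S. h a * z^(g a)) = 0"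
  shows "(\<Sum>a\<in>{a\<in>S. g a = i}. h a) = 0"
proof -
  define N where "N = Max (insert 0 (g ` S))"
  have gN: "g a \<le> N" if "a \<in> S" for a
    unfolding N_def using assms(1) that by (intro Max_ge) auto
  have eq: "(\<Sum>a\<in>S. h a * z^(g a)) = (\<Sum>j\<le>N. (\<Sum>a\<in>{a\<in>S. g a = j}. h a) * z^j)" for z
  proof -
    have "(\<Sum>a\<in>S. h a * z^(g a)) = (\<Sum>j\<le>N. \<Sum>a\<in>{a\<in>S. g a = j}. h a * z^(g a))"
      by (rule sum.group[symmetric]) (use assms(1) gN in auto)
    also have "\<dots> = (\<Sum>j\<le>N. (\<Sum>a\<in>{a\<in>S. g a = j}. h a) * z^j)"
      by (auto simp: sum_distrib_right intro!: sum.cong)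
    finally show ?thesis .
  qed
  show ?thesis
  proof (cases "i \<le> N")
    case True
    then show ?thesis
      using poly_coeff_zero_if_vanishing[OF assms(2), where b="\<lambda>j. \<Sum>a\<in>{a\<in>S. g a = j}. h a"]
        assms(3) eq by auto
  next
    case False
    then have "{a\<in>S. g a = i} = {}" using gN by force
    then show ?thesis by (simp only: sum.empty)
  qed
qed

definition vec3 :: "'a \<Rightarrow> 'a \<Rightarrow> 'a \<Rightarrow> 'a^3" where
  "vec3 u v w = (\<chi> j. if j = 0 then u else if j = 1 then v else w)"

lemma vec3_nth [simp]: "vec3 u v w $ 0 = u" "vec3 u v w $ 1 = v" "vec3 u v w $ 2 = w"
  by (simp_all add: vec3_def)

lemma coeff_zero_if_vanishing_on_box:
  fixes c :: "mono \<Rightarrow> complex"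
  assumes S: "finite S" and Z: "infinite Z0" "infinite Z1" "infinite Z2"
    and vanish: "\<And>x. x$0 \<in> Z0 \<Longrightarrow> x$1 \<in> Z1 \<Longrightarrow> x$2 \<in> Z2 \<Longrightarrow> (\<Sum>a\<in>S. c a * mon a x) = 0"
    and b: "b \<in> S"
  shows "c b = 0"
proof -
  have s1: "(\<Sum>a\<in>{a\<in>S. a 0 = i}. c a * x1^(a 1) * x2^(a 2)) = 0"
    if "x1 \<in> Z1" "x2 \<in> Z2" for i x1 x2
  proof (rule coeff_sum_zero_if_vanishing[OF S Z(1)])
    show "\<forall>z\<in>Z0. (\<Sum>a\<in>S. c a * x1 ^ a 1 * x2 ^ a 2 * z ^ a 0) = 0"
      using vanish[of "vec3 _ x1 x2"] that by (auto simp: mon_num3 mult_ac)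
  qed
  have s2: "(\<Sum>a\<in>{a\<in>{a\<in>S. a 0 = i}. a 1 = j}. c a * x2^(a 2)) = 0"
    if "x2 \<in> Z2" for i j x2
  proof (rule coeff_sum_zero_if_vanishing[OF _ Z(2)])
    show "\<forall>z\<in>Z1. (\<Sum>a\<in>{a\<in>S. a 0 = i}. c a * x2 ^ a 2 * z ^ a 1) = 0"
      using s1[of _ x2 i] that by (auto simp: mult_ac)
  qed (use S in auto)
  have s3: "(\<Sum>a\<in>{a\<in>{a\<in>{a\<in>S. a 0 = i}. a 1 = j}. a 2 = k}. c a) = 0" for i j k
    by (rule coeff_sum_zero_if_vanishing[OF _ Z(3)]) (use S s2 in auto)
  have "{a\<in>{a\<in>{a\<in>S. a 0 = b 0}. a 1 = b 1}. a 2 = b 2} = {b}"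
    using b mono_eq_iff by auto
  then show ?thesis using s3[of "b 0" "b 1" "b 2"] by simp
qed

lemma dense_ev_nonzero:
  assumes F: "is_triple d F"
  shows "closure {x. ev F x \<noteq> 0} = UNIV"
proof (rule ccontr)
  assume "closure {x. ev F x \<noteq> 0} \<noteq> UNIV"
  then obtain y where "y \<notin> closure {x. ev F x \<noteq> 0}" by auto
  then obtain e where e: "e > 0" "\<And>x. ev F x \<noteq> 0 \<Longrightarrow> dist x y \<ge> e"
    unfolding closure_approachable by (auto simp: not_less)
  have inf_ball: "infinite (ball z (e/3))" for z :: complex
    using uncountable_ball[of "e/3" z] countable_finite e(1) by auto
  obtain i b where ib: "F (i,b) \<noteq> 0" using F unfolding is_triple_def by auto
  have "F (i,b) = 0"
  proof (rule coeff_zero_if_vanishing_on_box[OF finite_monos_deg inf_ball inf_ball inf_ball])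
    show "b \<in> monos_deg d" using coeff_support_subset[OF F, of i] ib by auto
    fix x :: "complex^3"
    assume x: "x$0 \<in> ball (y$0) (e/3)" "x$1 \<in> ball (y$1) (e/3)" "x$2 \<in> ball (y$2) (e/3)"
    have "dist x y \<le> norm ((x - y)$0) + norm ((x - y)$1) + norm ((x - y)$2)"
      using norm_vec_le_sum[of "x - y"] by (simp add: dist_norm sum_UNIV_num3)
    also have "\<dots> < e" using x by (simp add: dist_norm norm_minus_commute)
    finally have "ev F x = 0" using e(2)[of x] by force
    then show "(\<Sum>a\<in>monos_deg d. F (i, a) * mon a x) = 0"
      using ev_nth_eq_sum_monos_deg[OF F, of x i] by simp
  qed
  then show False using ib by simp
qed

lemma ex_ev_nonzero: "is_triple d F \<Longrightarrow> \<exists>x. ev F x \<noteq> 0"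
  using dense_ev_nonzero[of d F]
    by (metis (mono_tags) closure_empty empty_Collect_eq empty_not_UNIV)

lemma open_ev_nonzero: "is_triple d F \<Longrightarrow> open {x. ev F x \<noteq> 0}"
  using continuous_on_ev[of d F] by (intro open_Collect_neq continuous_intros) auto

lemma par_refl: "par u u"
  by (simp add: par_def mult.commute)

lemma par_sym: "par u v \<Longrightarrow> par v u"
  by (simp add: par_def mult.commute)

lemma par_nonzero_imp_multiple:
  assumes "u \<noteq> 0" "par u v"
  obtains l where "v = l *s u"
proof -
  obtain i where i: "u$i \<noteq> 0" using assms(1) by (auto simp: vec_eq_iff)
  have "u$i * v$j = u$j * v$i" for j using assms(2) unfolding par_def by blast
  then have "v = (v$i / u$i) *s u" using i by (simp add: vec_eq_iff field_simps)
  then show ?thesis by (rule that)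
qed

lemma par_multiples: "par (a *s w) (b *s w)"
  by (simp add: par_def mult_ac)

lemma par_smult_left: "par u v \<Longrightarrow> par (c *s u) v"
  by (simp add: par_def mult_ac)

lemma par_smult_left_iff: "c \<noteq> 0 \<Longrightarrow> par (c *s u) v \<longleftrightarrow> par u v"
  by (auto simp: par_def mult_ac)

lemma par_trans:
  assumes "u \<noteq> 0" "par u v" "par u w" shows "par v w"
proof -
  obtain a where "v = a *s u" using par_nonzero_imp_multiple assms by blast
  moreover obtain b where "w = b *s u" using par_nonzero_imp_multiple assms by blast
  ultimately show ?thesis by (simp add: par_multiples)
qed

lemma par_matrix_vector_mult:
  assumes "par u v" shows "par (A *v u) (A *v v)"
proof -
  have "(A *v u)$i * (A *v v)$j = (A *v u)$j * (A *v v)$i" for i j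
  proof -
    have "(A *v u)$i * (A *v v)$j = (\<Sum>k\<in>UNIV. \<Sum>l\<in>UNIV. A$i$k * A$j$l * (u$k * v$l))"
      by (simp add: matrix_vector_mult_def sum_product mult_ac)
    also have "\<dots> = (\<Sum>k\<in>UNIV. \<Sum>l\<in>UNIV. A$i$k * A$j$l * (u$l * v$k))"
      using assms by (simp add: par_def)
    also have "\<dots> = (\<Sum>l\<in>UNIV. \<Sum>k\<in>UNIV. A$i$k * A$j$l * (u$l * v$k))"
      by (rule sum.swap)
    also have "\<dots> = (A *v u)$j * (A *v v)$i"
      by (simp add: matrix_vector_mult_def sum_product mult_ac)
    finally show ?thesis .
  qed
  then show ?thesis by (simp add: par_def)
qed

lemma closed_par:
  assumes "continuous_on UNIV p" "continuous_on UNIV q"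
  shows "closed {x. par (p x) (q x)}"
proof -
  have "{x. par (p x) (q x)} = (\<Inter>i. \<Inter>j. {x. (p x)$i * (q x)$j = (p x)$j * (q x)$i})"
    by (auto simp: par_def)
  moreover have "closed {x. (p x)$i * (q x)$j = (p x)$j * (q x)$i}" for i j
    by (intro closed_Collect_eq continuous_intros assms continuous_on_product_then_coordinatewise)
  ultimately show ?thesis by (simp add: closed_INT)
qed

lemma par_if_par_on_dense:
  assumes "continuous_on UNIV p" "continuous_on UNIV q" "closure D = UNIV"
    "\<And>x. x \<in> D \<Longrightarrow> par (p x) (q x)"
  shows "par (p x) (q x)"
proof -
  have "closure D \<subseteq> {x. par (p x) (q x)}"
    using closed_par[OF assms(1,2)] assms(4) by (intro closure_minimal) auto
  then show ?thesis using assms(3) by auto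
qed

lemma bir_of_self: "is_triple d K \<Longrightarrow> K \<in> bir_of K"
  by (auto simp: bir_of_def par_refl)

lemma bir_of_eq_if_ev_multiple:
  assumes "\<And>x. ev K x = c *s ev K' x" "c \<noteq> 0"
  shows "bir_of K = bir_of K'"
  using assms by (auto simp: bir_of_def par_smult_left_iff)

lemma par_if_bir_of_eq:
  assumes "is_triple e K'" "bir_of K = bir_of K'"
  shows "par (ev K x) (ev K' x)"
  using bir_of_self[OF assms(1)] assms(2) by (auto simp: bir_of_def)

lemma par_transfer:
  assumes K: "is_triple d K" and K': "is_triple d' K'" and G: "is_triple e G"
    and KK': "\<And>x. par (ev K x) (ev K' x)" and KG: "\<And>x. par (ev K x) (ev G x)"
  shows "par (ev K' x) (ev G x)"
proof (rule par_if_par_on_dense[OF continuous_on_ev[OF K'] continuous_on_ev[OF G]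
      dense_ev_nonzero[OF K]])
  fix x assume "x \<in> {x. ev K x \<noteq> 0}"
  then show "par (ev K' x) (ev G x)" using par_trans KK' KG by blast
qed

lemma bir_of_eq_if_par:
  assumes K: "is_triple d K" and K': "is_triple d' K'" and KK': "\<And>x. par (ev K x) (ev K' x)"
  shows "bir_of K = bir_of K'"
proof -
  have "par (ev K' x) (ev G x)" if "is_triple e G" "\<And>x. par (ev K x) (ev G x)" for G e x
    using par_transfer[OF K K' that(1) KK' that(2)] .
  moreover have "par (ev K x) (ev G x)" if "is_triple e G" "\<And>x. par (ev K' x) (ev G x)" for G e x
    using par_transfer[OF K' K that(1) _ that(2)] KK' par_sym by blast
  ultimately show ?thesis unfolding bir_of_def by blast
qed

lemma ev_scaled_triple: "c \<noteq> 0 \<Longrightarrow> ev (\<lambda>k. c * K k) x = c *s ev K x"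
  by (simp add: ev_def vec_eq_iff sum_distrib_left mult.assoc)

lemma is_triple_scaled: "is_triple d K \<Longrightarrow> c \<noteq> 0 \<Longrightarrow> is_triple d (\<lambda>k. c * K k)"
  by (auto simp: is_triple_def)

lemma proj_cls_self: "K \<in> proj_cls K"
  unfolding proj_cls_def by (intro CollectI exI[of _ 1]) auto

lemma some_proj_cls:
  obtains c where "c \<noteq> 0" "(SOME F. F \<in> proj_cls K) = (\<lambda>k. c * K k)"
proof -
  have "(SOME F. F \<in> proj_cls K) \<in> proj_cls K"
    using proj_cls_self by (rule someI[where P = "\<lambda>F. F \<in> proj_cls K"])
  then show ?thesis using that unfolding proj_cls_def by auto
qed

lemma bir_of_cls_proj_cls: "bir_of_cls (proj_cls K) = bir_of K"
proof -
  obtain c where c: "c \<noteq> 0" "(SOME F. F \<in> proj_cls K) = (\<lambda>k. c * K k)"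
    by (rule some_proj_cls)
  show ?thesis
    unfolding bir_of_cls_def c(2)
      by (rule bir_of_eq_if_ev_multiple[OF ev_scaled_triple[OF c(1)] c(1)])
qed

lemma proj_cls_in_H:
  assumes K: "is_triple d K" and G: "is_triple e G" and KG: "inv_pair K G" "inv_pair G K"
  shows "proj_cls K \<in> H d"
proof -
  have "birational (\<lambda>k. c * K k)" if c: "c \<noteq> 0" for c
    unfolding birational_def
  proof (intro conjI exI)
    show "is_triple d (\<lambda>k. c * K k)" using is_triple_scaled K c by blast
    show "is_triple e G" by fact
    show "inv_pair (\<lambda>k. c * K k) G"
      using KG(1) c by (auto simp: inv_pair_def ev_scaled_triple par_smult_left_iff)
    show "inv_pair G (\<lambda>k. c * K k)"
      using KG(2) c by (auto simp: inv_pair_def ev_scaled_triple ev_homogeneous[OF G]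
          par_smult_left_iff)
  qed
  then show ?thesis unfolding H_def W_def triples_def proj_cls_def using K by auto
qed

lemma bir_of_in_Bir:
  assumes "is_triple d K" "d \<ge> 1" "proj_cls K \<in> H d"
  shows "bir_of K \<in> Bir"
proof -
  have "bir_of K \<in> Bir_le d"
    unfolding Bir_le_def using assms(3) bir_of_cls_proj_cls by force
  then show ?thesis unfolding Bir_def using assms(2) by auto
qed

lemma Bir_cases:
  assumes "\<phi> \<in> Bir"
  obtains d K where "d \<ge> 1" "is_triple d K" "birational K" "\<phi> = bir_of K"
proof -
  obtain d P where d: "d \<ge> 1" "P \<in> H d" "\<phi> = bir_of_cls P"
    using assms unfolding Bir_def Bir_le_def by auto
  then obtain F where F: "is_triple d F" "P = proj_cls F" "\<forall>G\<in>P. birational G"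
    unfolding H_def W_def triples_def by auto
  obtain c where c: "c \<noteq> 0" "(SOME G. G \<in> P) = (\<lambda>k. c * F k)"
    using some_proj_cls F(2) by metis
  show ?thesis
  proof (rule that[OF d(1) is_triple_scaled[OF F(1) c(1)]])
    show "birational (\<lambda>k. c * F k)"
      using F(2,3) c(2) someI[of "\<lambda>G. G \<in> P" F] proj_cls_self by auto
    show "\<phi> = bir_of (\<lambda>k. c * F k)" using d(3) c(2) by (simp add: bir_of_cls_def)
  qed
qed

text \<open>On the dense set where \<open>K\<^sub>0\<close> and \<open>G\<close> do not vanish, homogeneity of \<open>F\<^sub>0\<close> makes all three
  sides non-zero multiples of \<open>ev K\<^sub>0\<close>.\<close>

lemma par_ev_comp_representatives:
  assumes F0: "is_triple d F0" "d \<ge> 1" and K0: "is_triple k K0"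
    and comp: "\<And>x. ev K0 x = ev F0 (ev G0 x)"
    and F: "F \<in> bir_of F0" and G: "G \<in> bir_of G0" and K: "K \<in> bir_of K0"
  shows "par (ev K x) (ev F (ev G x))"
proof -
  obtain dF where dF: "is_triple dF F" "\<And>y. par (ev F0 y) (ev F y)"
    using F by (auto simp: bir_of_def)
  obtain dG where dG: "is_triple dG G" "\<And>y. par (ev G0 y) (ev G y)"
    using G by (auto simp: bir_of_def)
  obtain dK where dK: "is_triple dK K" "\<And>y. par (ev K0 y) (ev K y)"
    using K by (auto simp: bir_of_def)
  have dense: "closure ({x. ev K0 x \<noteq> 0} \<inter> {x. ev G x \<noteq> 0}) = UNIV"
    by (rule dense_Int_open[OF open_ev_nonzero[OF K0] dense_ev_nonzero[OF K0]
          dense_ev_nonzero[OF dG(1)]])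
  have "continuous_on UNIV (\<lambda>x. ev F (ev G x))"
    using continuous_on_ev[OF dF(1)] continuous_on_ev[OF dG(1)]
    by (metis continuous_on_compose2 subset_UNIV)
  then show ?thesis
  proof (rule par_if_par_on_dense[OF continuous_on_ev[OF dK(1)] _ dense])
    fix y assume y: "y \<in> {x. ev K0 x \<noteq> 0} \<inter> {x. ev G x \<noteq> 0}"
    have G0y: "ev G0 y \<noteq> 0"
      using y comp ev_zero[OF F0] by force
    obtain l where l: "ev G y = l *s ev G0 y" using par_nonzero_imp_multiple[OF G0y dG(2)] .
    have FG: "ev F0 (ev G y) = l ^ d *s ev K0 y" using l ev_homogeneous[OF F0(1)] comp by simp
    have "l \<noteq> 0" using l y by auto
    then have FG0: "ev F0 (ev G y) \<noteq> 0" using FG y by (auto simp: vec_eq_iff)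
    obtain m where m: "ev F (ev G y) = m *s ev F0 (ev G y)"
      using par_nonzero_imp_multiple[OF FG0 dF(2)] .
    have K0y: "ev K0 y \<noteq> 0" using y by simp
    obtain n where n: "ev K y = n *s ev K0 y" using par_nonzero_imp_multiple[OF K0y dK(2)] .
    show "par (ev K y) (ev F (ev G y))"
      unfolding n m FG by (simp add: par_multiples)
  qed
qed

text \<open>\<open>bir_comp\<close> is a definite description, so it can only be evaluated once a triple of the
  composite is known to lie in \<open>Bir\<close>.\<close>

lemma bir_comp_bir_of:
  assumes F0: "is_triple d F0" "d \<ge> 1" and G0: "is_triple e G0" and K0: "is_triple k K0"
    and comp: "\<And>x. ev K0 x = ev F0 (ev G0 x)" and B: "bir_of K0 \<in> Bir"
  shows "bir_comp (bir_of F0) (bir_of G0) = bir_of K0"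
  unfolding bir_comp_def
proof (rule the_equality)
  show "bir_of K0 \<in> Bir \<and>
      (\<forall>F\<in>bir_of F0. \<forall>G\<in>bir_of G0. \<forall>K\<in>bir_of K0. \<forall>x. par (ev K x) (ev F (ev G x)))"
    using B par_ev_comp_representatives[OF F0 K0 comp] by blast
next
  fix C assume C: "C \<in> Bir \<and> (\<forall>F\<in>bir_of F0. \<forall>G\<in>bir_of G0. \<forall>K\<in>C. \<forall>x. par (ev K x) (ev F (ev G x)))"
  then obtain dd K' where K': "is_triple dd K'" "C = bir_of K'" using Bir_cases by metis
  have "par (ev K' x) (ev K0 x)" for x
    using C K' bir_of_self[OF K'(1)] bir_of_self[OF F0(1)] bir_of_self[OF G0] comp by metis
  then show "C = bir_of K0" using bir_of_eq_if_par[OF K'(1) K0] K'(2) by simp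
qed

section \<open>Homogeneous polynomial functions\<close>

definition hom_poly :: "nat \<Rightarrow> (complex^3 \<Rightarrow> complex) \<Rightarrow> bool" where
  "hom_poly d p \<longleftrightarrow>
     (\<exists>c S. finite S \<and> (\<forall>a\<in>S. mdeg a = d) \<and> (\<forall>x. p x = (\<Sum>a\<in>S. c a * mon a x)))"

definition unit_mono :: "3 \<Rightarrow> mono" where
  "unit_mono j = (\<lambda>k. if k = j then 1 else 0)"

definition mono_add :: "mono \<Rightarrow> mono \<Rightarrow> mono" where
  "mono_add b c = (\<lambda>j. b j + c j)"

lemma mdeg_unit_mono: "mdeg (unit_mono j) = 1"
  by (simp add: mdeg_def unit_mono_def)

lemma mon_unit_mono: "mon (unit_mono j) x = x $ j"
proof -
  have "mon (unit_mono j) x = (\<Prod>k\<in>UNIV. if k = j then x$k else 1)"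
    unfolding mon_def unit_mono_def by (intro prod.cong) auto
  then show ?thesis by simp
qed

lemma inj_unit_mono: "inj unit_mono"
  by (auto simp: inj_def unit_mono_def fun_eq_iff split: if_splits)

lemma mdeg_mono_add: "mdeg (mono_add b c) = mdeg b + mdeg c"
  by (simp add: mdeg_def mono_add_def sum.distrib)

lemma mon_mono_add: "mon (mono_add b c) x = mon b x * mon c x"
  by (simp add: mon_def mono_add_def power_add prod.distrib)

lemma hom_poly_zero: "hom_poly d (\<lambda>x. 0)"
  unfolding hom_poly_def by (intro exI[of _ "\<lambda>_. 0"] exI[of _ "{}"]) auto

lemma hom_poly_const: "hom_poly 0 (\<lambda>x. k)"
  unfolding hom_poly_def
  by (intro exI[of _ "\<lambda>_. k"] exI[of _ "{\<lambda>_. 0}"]) (auto simp: mdeg_def mon_def)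

lemma hom_poly_coord: "hom_poly 1 (\<lambda>x. x $ j)"
  unfolding hom_poly_def
  by (intro exI[of _ "\<lambda>_. 1"] exI[of _ "{unit_mono j}"]) (auto simp: mdeg_unit_mono mon_unit_mono)

lemma hom_poly_cmult:
  assumes "hom_poly d p" shows "hom_poly d (\<lambda>x. k * p x)"
proof -
  obtain c S where "finite S" "\<forall>a\<in>S. mdeg a = d" "\<forall>x. p x = (\<Sum>a\<in>S. c a * mon a x)"
    using assms unfolding hom_poly_def by blast
  then show ?thesis unfolding hom_poly_def
    by (intro exI[of _ "\<lambda>a. k * c a"] exI[of _ S]) (auto simp: sum_distrib_left mult.assoc)
qed

lemma hom_poly_add:
  assumes "hom_poly d p" "hom_poly d q" shows "hom_poly d (\<lambda>x. p x + q x)"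
proof -
  obtain c1 S1 where 1: "finite S1" "\<forall>a\<in>S1. mdeg a = d" "\<forall>x. p x = (\<Sum>a\<in>S1. c1 a * mon a x)"
    using assms(1) unfolding hom_poly_def by blast
  obtain c2 S2 where 2: "finite S2" "\<forall>a\<in>S2. mdeg a = d" "\<forall>x. q x = (\<Sum>a\<in>S2. c2 a * mon a x)"
    using assms(2) unfolding hom_poly_def by blast
  define c where "c a = (if a \<in> S1 then c1 a else 0) + (if a \<in> S2 then c2 a else 0)" for a
  have "p x + q x = (\<Sum>a\<in>S1 \<union> S2. c a * mon a x)" for x
  proof -
    have e1: "(\<Sum>a\<in>S1 \<union> S2. (if a \<in> S1 then c1 a else 0) * mon a x) = (\<Sum>a\<in>S1. c1 a * mon a x)"
      by (rule sum.mono_neutral_cong_right) (use 1 2 in auto)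
    have e2: "(\<Sum>a\<in>S1 \<union> S2. (if a \<in> S2 then c2 a else 0) * mon a x) = (\<Sum>a\<in>S2. c2 a * mon a x)"
      by (rule sum.mono_neutral_cong_right) (use 1 2 in auto)
    show ?thesis unfolding c_def distrib_right sum.distrib e1 e2 using 1 2 by simp
  qed
  then show ?thesis unfolding hom_poly_def using 1 2 by (intro exI[of _ c] exI[of _ "S1 \<union> S2"]) auto
qed

lemma hom_poly_mult:
  assumes "hom_poly d1 p" "hom_poly d2 q" shows "hom_poly (d1 + d2) (\<lambda>x. p x * q x)"
proof -
  obtain c1 S1 where 1: "finite S1" "\<forall>a\<in>S1. mdeg a = d1" "\<forall>x. p x = (\<Sum>a\<in>S1. c1 a * mon a x)"
    using assms(1) unfolding hom_poly_def by blast
  obtain c2 S2 where 2: "finite S2" "\<forall>a\<in>S2. mdeg a = d2" "\<forall>x. q x = (\<Sum>a\<in>S2. c2 a * mon a x)"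
    using assms(2) unfolding hom_poly_def by blast
  define g where "g = (\<lambda>bc. mono_add (fst bc) (snd bc))"
  define S where "S = g ` (S1 \<times> S2)"
  define r where "r a = (\<Sum>bc\<in>{bc\<in>S1 \<times> S2. g bc = a}. c1 (fst bc) * c2 (snd bc))" for a
  have "p x * q x = (\<Sum>a\<in>S. r a * mon a x)" for x
  proof -
    have "(\<Sum>a\<in>S. r a * mon a x) =
        (\<Sum>a\<in>S. \<Sum>bc\<in>{bc\<in>S1 \<times> S2. g bc = a}. c1 (fst bc) * c2 (snd bc) * mon (g bc) x)"
      unfolding r_def sum_distrib_right by (intro sum.cong refl) auto
    also have "\<dots> = (\<Sum>bc\<in>S1 \<times> S2. c1 (fst bc) * c2 (snd bc) * mon (g bc) x)"
      by (rule sum.group) (use 1 2 in \<open>auto simp: S_def\<close>)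
    also have "\<dots> = (\<Sum>bc\<in>S1 \<times> S2. (c1 (fst bc) * mon (fst bc) x) * (c2 (snd bc) * mon (snd bc) x))"
      by (intro sum.cong refl) (simp add: g_def mon_mono_add mult_ac)
    also have "\<dots> = p x * q x"
      using 1(3) 2(3) by (simp add: sum_product sum.cartesian_product split_def)
    finally show ?thesis by simp
  qed
  moreover have "finite S" "\<forall>a\<in>S. mdeg a = d1 + d2"
    unfolding S_def g_def using 1 2 by (auto simp: mdeg_mono_add)
  ultimately show ?thesis unfolding hom_poly_def by blast
qed

lemma hom_poly_sum:
  assumes "finite I" "\<And>i. i \<in> I \<Longrightarrow> hom_poly d (p i)"
  shows "hom_poly d (\<lambda>x. \<Sum>i\<in>I. p i x)"
  using assms by (induction I rule: finite_induct) (auto intro: hom_poly_zero hom_poly_add)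

lemma hom_poly_prod:
  assumes "finite I" "\<And>i. i \<in> I \<Longrightarrow> hom_poly (d i) (p i)"
  shows "hom_poly (\<Sum>i\<in>I. d i) (\<lambda>x. \<Prod>i\<in>I. p i x)"
  using assms by (induction I rule: finite_induct) (auto intro: hom_poly_const hom_poly_mult)

lemma hom_poly_power:
  assumes "hom_poly d p" shows "hom_poly (n * d) (\<lambda>x. p x ^ n)"
proof (induction n)
  case 0 then show ?case using hom_poly_const by simp
next
  case (Suc n) then show ?case using hom_poly_mult[OF assms Suc] by (simp add: mult.commute)
qed

lemma hom_poly_ev: "is_triple d F \<Longrightarrow> hom_poly d (\<lambda>x. ev F x $ i)"
  unfolding hom_poly_def using ev_nth_eq_sum_monos_deg[of d F] finite_monos_deg
  by (intro exI[of _ "\<lambda>a. F (i,a)"] exI[of _ "monos_deg d"]) (auto simp: monos_deg_def)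

lemma hom_poly_matrix_vector_mult:
  "(\<And>j. hom_poly d (\<lambda>x. g x $ j)) \<Longrightarrow> hom_poly d (\<lambda>x. (A *v g x) $ i)"
  unfolding matrix_vector_mult_def by (simp add: hom_poly_sum hom_poly_cmult)

lemma ex_triple_of_hom_poly:
  assumes hp: "\<And>i. hom_poly d (\<lambda>x. g x $ i)" and nz: "g x0 \<noteq> 0"
  obtains K where "is_triple d K" "\<And>x. ev K x = g x"
proof -
  have "\<forall>i. \<exists>c S. finite S \<and> (\<forall>a\<in>S. mdeg a = d) \<and> (\<forall>x. g x $ i = (\<Sum>a\<in>S. c a * mon a x))"
    using hp unfolding hom_poly_def by blast
  then obtain c S where cS: "\<And>i. finite (S i)" "\<And>i. \<forall>a\<in>S i. mdeg a = d"
    "\<And>i x. g x $ i = (\<Sum>a\<in>S i. c i a * mon a x)"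
    by metis
  define K where "K = (\<lambda>(i,a). if a \<in> S i then c i a else 0)"
  have ev: "ev K x = g x" for x
  proof -
    have "ev K x $ i = g x $ i" for i
      by (subst ev_nth_eq_sum_superset[of "S i"]) (use cS in \<open>auto simp: K_def split: if_splits\<close>)
    then show ?thesis by (simp add: vec_eq_iff)
  qed
  have "is_triple d K"
    unfolding is_triple_def
  proof
    show "\<exists>k. K k \<noteq> 0" using ev nz by (intro ev_nonzero_imp_coeff_nonzero[of K x0]) simp
    show "\<forall>i a. K (i, a) \<noteq> 0 \<longrightarrow> mdeg a = d" using cS(2) by (auto simp: K_def split: if_splits)
  qed
  then show ?thesis using ev that by blast
qed

lemma ex_triple_comp_linear:
  assumes G: "is_triple e G" and nz: "ev G (L *v x0) \<noteq> 0"
  obtains J where "is_triple e J" "\<And>x. ev J x = ev G (L *v x)"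
proof (rule ex_triple_of_hom_poly[where g="\<lambda>x. ev G (L *v x)"])
  fix i
  have "hom_poly e (\<lambda>x. \<Sum>a\<in>monos_deg e. G (i,a) * (\<Prod>j\<in>UNIV. ((L *v x)$j) ^ a j))"
  proof (intro hom_poly_sum hom_poly_cmult finite_monos_deg)
    fix a assume a: "a \<in> monos_deg e"
    have "hom_poly (\<Sum>j\<in>UNIV. a j * 1) (\<lambda>x. \<Prod>j\<in>UNIV. ((L *v x)$j) ^ a j)"
      by (intro hom_poly_prod hom_poly_power hom_poly_matrix_vector_mult hom_poly_coord) auto
    then show "hom_poly e (\<lambda>x. \<Prod>j\<in>UNIV. ((L *v x)$j) ^ a j)"
      using a by (simp add: monos_deg_def mdeg_def)
  qed
  then show "hom_poly e (\<lambda>x. ev G (L *v x) $ i)"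
    by (simp add: ev_nth_eq_sum_monos_deg[OF G] mon_def)
qed (use nz that in auto)

definition mat_inverses :: "complex^3^3 \<Rightarrow> complex^3^3 \<Rightarrow> bool" where
  "mat_inverses A A' \<longleftrightarrow> A ** A' = mat 1 \<and> A' ** A = mat 1"

definition bir_lin :: "complex^3^3 \<Rightarrow> triple set" where
  "bir_lin A = bir_of (lin_triple A)"

lemma mat_inverses_sym: "mat_inverses A A' \<Longrightarrow> mat_inverses A' A"
  by (simp add: mat_inverses_def)

lemma mat_inverses_if_right_inverse: "A ** A' = mat 1 \<Longrightarrow> mat_inverses A A'"
  using matrix_left_right_inverse[of A A'] by (simp add: mat_inverses_def)

lemma mat_inverses_mult:
  "mat_inverses A A' \<Longrightarrow> mat_inverses B B' \<Longrightarrow> mat_inverses (A ** B) (B' ** A')"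
  unfolding mat_inverses_def by (metis matrix_mul_assoc matrix_mul_rid)

lemma mat_inverses_mat_1: "mat_inverses (mat 1) (mat 1)"
  by (simp add: mat_inverses_def)

lemma mat_inverses_apply:
  "mat_inverses A A' \<Longrightarrow> A *v (A' *v x) = x" "mat_inverses A A' \<Longrightarrow> A' *v (A *v x) = x"
  by (simp_all add: mat_inverses_def matrix_vector_mul_assoc)

lemma mat_inverses_nonzero: "mat_inverses A A' \<Longrightarrow> v \<noteq> 0 \<Longrightarrow> A *v v \<noteq> 0"
  by (metis mat_inverses_apply(2) matrix_vector_mult_0_right)

lemma axis_nth: "(axis j 1 :: complex^3)$i = (if i = j then 1 else 0)"
  by (simp add: axis_def)

lemma axis_nonzero: "(axis j 1 :: complex^3) \<noteq> 0"
  by (simp add: vec_eq_iff axis_nth)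

lemma matrix_vector_mult_axis: "(R *v axis j 1) $ i = R$i$j"
  by (simp add: matrix_vector_mult_def axis_def if_distrib cong: if_cong)

lemma matrix_vector_mult_smult: "A *v (c *s x) = c *s (A *v (x::complex^3))"
  by (simp add: vec_eq_iff matrix_vector_mult_def sum_distrib_left mult_ac)

lemma lin_triple_coeff_nonzero:
  "lin_triple A (i, a) \<noteq> 0 \<Longrightarrow> a \<in> range unit_mono"
  by (rule ccontr) (auto simp: lin_triple_def unit_mono_def[symmetric] intro!: sum.neutral)

lemma ev_lin_triple: "ev (lin_triple A) x = A *v x"
proof -
  have "ev (lin_triple A) x $ i = (A *v x) $ i" for i
  proof -
    have coeff: "lin_triple A (i, unit_mono j) = A$i$j" for j
    proof -
      have "lin_triple A (i, unit_mono j) = (\<Sum>j'\<in>UNIV. if j' = j then A$i$j' else 0)"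
        unfolding lin_triple_def unit_mono_def[symmetric] using inj_unit_mono
        by (auto intro!: sum.cong simp: inj_eq)
      then show ?thesis by simp
    qed
    have "ev (lin_triple A) x $ i = (\<Sum>a\<in>range unit_mono. lin_triple A (i,a) * mon a x)"
      by (rule ev_nth_eq_sum_superset) (use lin_triple_coeff_nonzero in auto)
    also have "\<dots> = (\<Sum>j\<in>UNIV. A$i$j * x$j)"
      by (subst sum.reindex[OF inj_unit_mono]) (simp add: coeff mon_unit_mono)
    finally show ?thesis by (simp add: matrix_vector_mult_def)
  qed
  then show ?thesis by (simp add: vec_eq_iff)
qed

lemma is_triple_lin_triple:
  assumes "mat_inverses A A'" shows "is_triple 1 (lin_triple A)"
  unfolding is_triple_def
proof
  have "ev (lin_triple A) (A' *v axis 0 1) \<noteq> 0"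
    using assms by (simp add: ev_lin_triple mat_inverses_apply axis_nonzero)
  then show "\<exists>k. lin_triple A k \<noteq> 0" by (rule ev_nonzero_imp_coeff_nonzero)
  show "\<forall>i a. lin_triple A (i, a) \<noteq> 0 \<longrightarrow> mdeg a = 1"
    using lin_triple_coeff_nonzero mdeg_unit_mono by fastforce
qed

lemma inv_pair_lin_triple: "mat_inverses A A' \<Longrightarrow> inv_pair (lin_triple A) (lin_triple A')"
  unfolding inv_pair_def ev_lin_triple
  using axis_nonzero by (auto simp: mat_inverses_apply par_refl)

lemma bir_lin_in_Bir: "mat_inverses A A' \<Longrightarrow> bir_lin A \<in> Bir"
  unfolding bir_lin_def
  by (rule bir_of_in_Bir[OF is_triple_lin_triple _ proj_cls_in_H[OF is_triple_lin_triple
        is_triple_lin_triple inv_pair_lin_triple inv_pair_lin_triple]])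
    (auto intro: mat_inverses_sym)

lemma bir_id_eq_bir_lin: "bir_id = bir_lin (mat 1)"
  by (simp add: bir_id_def bir_lin_def)

lemma bir_comp_bir_lin:
  "mat_inverses A A' \<Longrightarrow> mat_inverses B B' \<Longrightarrow> bir_comp (bir_lin A) (bir_lin B) = bir_lin (A ** B)"
  unfolding bir_lin_def
  by (rule bir_comp_bir_of[OF is_triple_lin_triple _ is_triple_lin_triple
        is_triple_lin_triple[OF mat_inverses_mult]])
     (auto simp: ev_lin_triple matrix_vector_mul_assoc
       intro: bir_lin_in_Bir[unfolded bir_lin_def] mat_inverses_mult)

text \<open>To compute \<open>bir_comp (bir_lin A) \<phi>\<close> for a birational \<open>\<phi> = bir_of G\<close>, the composite \<open>A \<circ> G\<close>
  must be shown to lie in \<open>Bir\<close>; its inverse is \<open>G' \<circ> A\<^sup>-\<^sup>1\<close> for an inverse \<open>G'\<close> of \<open>G\<close>.\<close>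

lemma bir_comp_bir_lin_left:
  assumes A: "mat_inverses A A'" and G: "e \<ge> 1" "is_triple e G" "birational G"
  obtains K where "\<And>x. ev K x = A *v ev G x" "bir_comp (bir_lin A) (bir_of G) = bir_of K"
proof -
  obtain e' G' where G': "is_triple e' G'" "inv_pair G G'" "inv_pair G' G"
    using G(3) unfolding birational_def by blast
  obtain y0 where y0: "ev G y0 \<noteq> 0" using ex_ev_nonzero[OF G(2)] by blast
  obtain K where K: "is_triple e K" "\<And>x. ev K x = A *v ev G x"
    using ex_triple_of_hom_poly[of e "\<lambda>x. A *v ev G x" y0]
      hom_poly_matrix_vector_mult[OF hom_poly_ev[OF G(2)]] mat_inverses_nonzero[OF A y0]
    by blast
  obtain z0 where z0: "ev G' z0 \<noteq> 0" using ex_ev_nonzero[OF G'(1)] by blast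
  obtain J where J: "is_triple e' J" "\<And>x. ev J x = ev G' (A' *v x)"
    using ex_triple_comp_linear[OF G'(1), of A' "A *v z0"] z0 A by (auto simp: mat_inverses_apply)
  have KJ: "inv_pair K J"
    unfolding inv_pair_def
  proof
    obtain y where y: "ev G (ev G' y) \<noteq> 0" using G'(2) unfolding inv_pair_def by blast
    show "\<exists>x. ev K (ev J x) \<noteq> 0"
      by (rule exI[of _ "A *v y"])
        (simp add: K(2) J(2) mat_inverses_apply[OF A] mat_inverses_nonzero[OF A y])
    show "\<forall>x. par (ev K (ev J x)) x"
    proof
      fix x
      have "par (ev G (ev G' (A' *v x))) (A' *v x)" using G'(2) unfolding inv_pair_def by blast
      from par_matrix_vector_mult[OF this, of A] show "par (ev K (ev J x)) x"
        by (simp add: K(2) J(2) mat_inverses_apply[OF A])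
    qed
  qed
  have JK: "inv_pair J K"
    using G'(3) unfolding inv_pair_def by (simp add: K(2) J(2) mat_inverses_apply[OF A])
  have "bir_of K \<in> Bir"
    by (rule bir_of_in_Bir[OF K(1) G(1) proj_cls_in_H[OF K(1) J(1) KJ JK]])
  then have "bir_comp (bir_lin A) (bir_of G) = bir_of K"
    unfolding bir_lin_def
    by (intro bir_comp_bir_of[OF is_triple_lin_triple[OF A] _ G(2) K(1)])
      (auto simp: ev_lin_triple K(2))
  then show ?thesis using K(2) that by blast
qed

lemma bir_inv_bir_lin:
  assumes A: "mat_inverses A A'"
  shows "bir_inv (bir_lin A) = bir_lin A'"
  unfolding bir_inv_def
proof (rule the_equality)
  show "bir_lin A' \<in> Bir \<and> bir_comp (bir_lin A) (bir_lin A') = bir_id"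
    using bir_lin_in_Bir[OF mat_inverses_sym[OF A]] bir_comp_bir_lin[OF A mat_inverses_sym[OF A]] A
    by (simp add: mat_inverses_def bir_id_eq_bir_lin)
next
  fix \<psi> assume \<psi>: "\<psi> \<in> Bir \<and> bir_comp (bir_lin A) \<psi> = bir_id"
  then obtain e G where G: "e \<ge> 1" "is_triple e G" "birational G" "\<psi> = bir_of G"
    using Bir_cases by metis
  obtain K where K: "\<And>x. ev K x = A *v ev G x" "bir_comp (bir_lin A) (bir_of G) = bir_of K"
    using bir_comp_bir_lin_left[OF A G(1-3)] by metis
  have "bir_of K = bir_of (lin_triple (mat 1))" using \<psi> G(4) K(2) by (simp add: bir_id_def)
  then have "par (ev K x) x" for x
    using par_if_bir_of_eq[OF is_triple_lin_triple[OF mat_inverses_mat_1]]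
      by (simp add: ev_lin_triple)
  then have "par (ev G x) (ev (lin_triple A') x)" for x
    using par_matrix_vector_mult[of "ev K x" x A']
      by (simp add: K(1) mat_inverses_apply[OF A] ev_lin_triple)
  then show "\<psi> = bir_lin A'"
    unfolding G(4) bir_lin_def
    by (rule bir_of_eq_if_par[OF G(2) is_triple_lin_triple[OF mat_inverses_sym[OF A]]])
qed

definition scale_mat :: "complex \<Rightarrow> complex^3^3 \<Rightarrow> complex^3^3" where
  "scale_mat c A = (\<chi> i j. c * A$i$j)"

lemma scalar_matrix_if_par_all:
  assumes "\<And>x. par x (R *v x)"
  shows "R = scale_mat (R$0$0) (mat 1)"
proof -
  have off: "R$i$j = 0" if "i \<noteq> j" for i j
  proof -
    have "par (axis j 1) (R *v axis j 1)" by fact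
    then have "(axis j 1 :: complex^3)$j * (R *v axis j 1)$i =
        (axis j 1 :: complex^3)$i * (R *v axis j 1)$j"
      unfolding par_def by metis
    then show ?thesis using that by (simp add: matrix_vector_mult_axis axis_nth)
  qed
  have diag: "R$i$i = R$j$j" for i j
  proof (cases "i = j")
    case False
    have "par (axis i 1 + axis j 1) (R *v (axis i 1 + axis j 1))" by fact
    then have "(axis i 1 + axis j 1 :: complex^3)$i * (R *v (axis i 1 + axis j 1))$j =
      (axis i 1 + axis j 1 :: complex^3)$j * (R *v (axis i 1 + axis j 1))$i"
      unfolding par_def by metis
    then show ?thesis using False off
      by (simp add: matrix_vector_right_distrib matrix_vector_mult_axis axis_nth)
  qed simp
  show ?thesis
    unfolding vec_eq_iff using off diag[of _ 0] by (auto simp: scale_mat_def mat_def)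
qed

lemma bir_lin_eq_imp_scalar_multiple:
  assumes A: "mat_inverses A Ai" and B: "mat_inverses B Bi" and eq: "bir_lin A = bir_lin B"
  shows "B = scale_mat ((Ai ** B)$0$0) A"
proof -
  have "par (A *v x) (B *v x)" for x
    using par_if_bir_of_eq[OF is_triple_lin_triple[OF B] eq[unfolded bir_lin_def]]
    by (simp add: ev_lin_triple)
  then have "par x ((Ai ** B) *v x)" for x
    using par_matrix_vector_mult[of "A *v x" "B *v x" Ai] A
    by (simp add: mat_inverses_def matrix_vector_mul_assoc)
  then have R: "Ai ** B = scale_mat ((Ai ** B)$0$0) (mat 1)" by (rule scalar_matrix_if_par_all)
  have "B = A ** (Ai ** B)" using A by (simp add: mat_inverses_def matrix_mul_assoc)
  also have "\<dots> = scale_mat ((Ai ** B)$0$0) A"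
    by (subst R) (simp add: scale_mat_def matrix_matrix_mult_def mat_def vec_eq_iff if_distrib
        cong: if_cong)
  finally show ?thesis .
qed

section \<open>Unitary matrices\<close>

definition unitary3 :: "(complex^3^3) set" where
  "unitary3 = {A. A ** cstar A = mat 1}"

lemma unitary3_inverses: "A \<in> unitary3 \<Longrightarrow> mat_inverses A (cstar A)"
  by (rule mat_inverses_if_right_inverse) (simp add: unitary3_def)

lemma cstar_mult: "cstar (X ** Y) = cstar Y ** cstar X"
  by (simp add: cstar_def matrix_matrix_mult_def vec_eq_iff mult.commute)

lemma cstar_cstar: "cstar (cstar X) = X"
  by (simp add: cstar_def vec_eq_iff)

lemma cstar_mat_1: "cstar (mat 1 :: complex^3^3) = mat 1"
  by (auto simp: cstar_def mat_def vec_eq_iff)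

lemma unitary3_cstar_mult: "X \<in> unitary3 \<Longrightarrow> cstar X ** X = mat 1"
  using matrix_left_right_inverse[of X "cstar X"] by (simp add: unitary3_def)

lemma unitary3_mult: "X \<in> unitary3 \<Longrightarrow> Y \<in> unitary3 \<Longrightarrow> X ** Y \<in> unitary3"
  unfolding unitary3_def by (simp add: cstar_mult) (metis matrix_mul_assoc matrix_mul_rid)

lemma unitary3_cstar: "X \<in> unitary3 \<Longrightarrow> cstar X \<in> unitary3"
  using unitary3_cstar_mult by (simp add: cstar_cstar unitary3_def)

lemma scale_mat_matrix_vector_mult: "scale_mat u X *v v = u *s (X *v v)"
  by (simp add: scale_mat_def matrix_vector_mult_def vec_eq_iff sum_distrib_left mult.assoc)

lemma cstar_scale_mat: "cstar (scale_mat u X) = scale_mat (cnj u) (cstar X)"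
  by (simp add: cstar_def scale_mat_def vec_eq_iff)

lemma matrix_mult_scale_mat_right: "X ** scale_mat u Y = scale_mat u (X ** Y)"
  by (simp add: scale_mat_def matrix_matrix_mult_def vec_eq_iff sum_distrib_left mult_ac)

lemma matrix_mult_scale_mat_left: "scale_mat u X ** Y = scale_mat u (X ** Y)"
  by (simp add: scale_mat_def matrix_matrix_mult_def vec_eq_iff sum_distrib_left mult_ac)

lemma scale_mat_scale_mat: "scale_mat u (scale_mat v X) = scale_mat (u * v) X"
  by (simp add: scale_mat_def vec_eq_iff mult.assoc)

lemma scale_mat_1: "scale_mat 1 X = X"
  by (simp add: scale_mat_def vec_eq_iff)

lemma continuous_on_scale_mat: "continuous_on UNIV (scale_mat u)"
  unfolding scale_mat_def by (intro continuous_on_vec_lambda continuous_intros)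

lemma unitary3_scale_mat: "X \<in> unitary3 \<Longrightarrow> u * cnj u = 1 \<Longrightarrow> scale_mat u X \<in> unitary3"
  unfolding unitary3_def
  by (simp add: cstar_scale_mat matrix_mult_scale_mat_left matrix_mult_scale_mat_right
      scale_mat_scale_mat scale_mat_1 mult.commute)

lemma unit_if_scale_mat_unitary3:
  assumes "X \<in> unitary3" "scale_mat l X \<in> unitary3" shows "l * cnj l = 1"
proof -
  have "scale_mat (cnj l * l) (mat 1) = mat 1"
    using assms unfolding unitary3_def
    by (simp add: cstar_scale_mat matrix_mult_scale_mat_left matrix_mult_scale_mat_right
        scale_mat_scale_mat)
  then have "scale_mat (cnj l * l) (mat 1) $ 0 $ 0 = (mat 1 :: complex^3^3) $ 0 $ 0" by simp
  then show ?thesis by (simp add: scale_mat_def mat_def mult.commute)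
qed

lemma bir_lin_eq_unitary3:
  assumes A: "A \<in> unitary3" and B: "B \<in> unitary3" and eq: "bir_lin A = bir_lin B"
  obtains u where "u * cnj u = 1" "B = scale_mat u A"
proof -
  define l where "l = (cstar A ** B)$0$0"
  have "B = scale_mat l A"
    using bir_lin_eq_imp_scalar_multiple[OF unitary3_inverses[OF A] unitary3_inverses[OF B] eq]
    by (simp add: l_def)
  moreover have "l * cnj l = 1" using unit_if_scale_mat_unitary3[OF A] B calculation by simp
  ultimately show ?thesis using that by blast
qed

lemma unitary3_entry_bound:
  assumes "X \<in> unitary3" shows "norm (X$i$j) \<le> 1"
proof -
  have "(\<Sum>k\<in>UNIV. X$i$k * cnj (X$i$k)) = 1"
    using assms by (simp add: unitary3_def mat_def matrix_matrix_mult_def cstar_def vec_eq_iff)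
  moreover have "X$i$k * cnj (X$i$k) = complex_of_real ((norm (X$i$k))^2)" for k
    by (rule complex_norm_square[symmetric])
  ultimately have "complex_of_real (\<Sum>k\<in>UNIV. (norm (X$i$k))^2) = 1"
    by (simp only: of_real_sum)
  then have "(\<Sum>k\<in>UNIV. (norm (X$i$k))^2) = 1"
    using of_real_eq_1_iff by blast
  moreover have "(norm (X$i$j))^2 \<le> (\<Sum>k\<in>UNIV. (norm (X$i$k))^2)"
    by (rule member_le_sum) auto
  ultimately show ?thesis by (simp add: power_le_one_iff abs_le_square_iff[symmetric])
qed

lemma compact_unitary3: "compact unitary3"
  unfolding compact_eq_bounded_closed
proof
  have "norm X \<le> 9" if "X \<in> unitary3" for X
  proof -
    have "norm (X$i) \<le> 3" for i
    proof -
      have "norm (X$i) \<le> (\<Sum>j\<in>UNIV. norm (X$i$j))" by (rule norm_vec_le_sum)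
      also have "\<dots> \<le> (\<Sum>j\<in>(UNIV::3 set). 1)"
        using unitary3_entry_bound[OF that] by (intro sum_mono) auto
      finally show ?thesis by simp
    qed
    then have "(\<Sum>i\<in>UNIV. norm (X$i)) \<le> (\<Sum>i\<in>(UNIV::3 set). 3)" by (intro sum_mono) auto
    then show ?thesis using norm_vec_le_sum[of X] by simp
  qed
  then show "bounded unitary3" unfolding bounded_iff by blast
  have eq: "unitary3 =
      (\<Inter>i. \<Inter>j. {X. (\<Sum>k\<in>UNIV. X$i$k * cnj (X$j$k)) = (mat 1 :: complex^3^3)$i$j})"
    by (auto simp: unitary3_def vec_eq_iff matrix_matrix_mult_def cstar_def)
  have "closed {X. (\<Sum>k\<in>UNIV. X$i$k * cnj (X$j$k)) = (mat 1 :: complex^3^3)$i$j}" for i j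
    by (intro closed_Collect_eq continuous_intros continuous_on_id)
  then show "closed unitary3" unfolding eq by (intro closed_INT ballI)
qed

lemma PSU3_lift:
  assumes "\<sigma> ` S = PSU3"
  obtains A where "\<And>y. y \<in> S \<Longrightarrow> A y \<in> unitary3 \<and> \<sigma> y = bir_lin (A y)"
proof
  fix y assume "y \<in> S"
  then have "\<sigma> y \<in> PSU3" using assms by blast
  then have "\<exists>A. A \<in> unitary3 \<and> \<sigma> y = bir_lin A"
    unfolding PSU3_def unitary3_def bir_lin_def by blast
  then show "(SOME A. A \<in> unitary3 \<and> \<sigma> y = bir_lin A) \<in> unitary3 \<and>
      \<sigma> y = bir_lin (SOME A. A \<in> unitary3 \<and> \<sigma> y = bir_lin A)"
    by (rule someI_ex)
qed

lemma bir_comp_bir_inv_bir_lin: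
  assumes "B \<in> unitary3" "X \<in> unitary3"
  shows "bir_comp (bir_inv (bir_lin B)) (bir_lin X) = bir_lin (cstar B ** X)"
  using bir_inv_bir_lin[OF unitary3_inverses[OF assms(1)]]
    bir_comp_bir_lin[OF mat_inverses_sym[OF unitary3_inverses[OF assms(1)]]
      unitary3_inverses[OF assms(2)]]
  by simp

lemma sum_rotate3: "(\<Sum>j\<in>A. \<Sum>k\<in>B. \<Sum>l\<in>C. g j k l) = (\<Sum>l\<in>C. \<Sum>j\<in>A. \<Sum>k\<in>B. g j k l)"
proof -
  have "(\<Sum>j\<in>A. \<Sum>k\<in>B. \<Sum>l\<in>C. g j k l) = (\<Sum>j\<in>A. \<Sum>l\<in>C. \<Sum>k\<in>B. g j k l)"
    by (intro sum.cong refl) (rule sum.swap)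
  also have "\<dots> = (\<Sum>l\<in>C. \<Sum>j\<in>A. \<Sum>k\<in>B. g j k l)" by (rule sum.swap)
  finally show ?thesis .
qed

lemma sum_swap_pairs:
  "(\<Sum>j\<in>A. \<Sum>k\<in>B. \<Sum>p\<in>C. \<Sum>q\<in>D. g j k p q) = (\<Sum>p\<in>C. \<Sum>q\<in>D. \<Sum>j\<in>A. \<Sum>k\<in>B. g j k p q)"
proof -
  have "(\<Sum>j\<in>A. \<Sum>k\<in>B. \<Sum>p\<in>C. \<Sum>q\<in>D. g j k p q) = (\<Sum>p\<in>C. \<Sum>j\<in>A. \<Sum>k\<in>B. \<Sum>q\<in>D. g j k p q)"
    by (rule sum_rotate3)
  also have "\<dots> = (\<Sum>p\<in>C. \<Sum>q\<in>D. \<Sum>j\<in>A. \<Sum>k\<in>B. g j k p q)"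
    by (intro sum.cong refl) (rule sum_rotate3)
  finally show ?thesis .
qed

definition mono2 :: "3 \<Rightarrow> 3 \<Rightarrow> mono" where
  "mono2 j k = mono_add (unit_mono j) (unit_mono k)"

definition quad_triple :: "(3 \<Rightarrow> 3 \<Rightarrow> 3 \<Rightarrow> complex) \<Rightarrow> triple" where
  "quad_triple Q = (\<lambda>(i,a). \<Sum>j\<in>UNIV. \<Sum>k\<in>UNIV. of_bool (a = mono2 j k) * Q i j k)"

lemma mdeg_mono2: "mdeg (mono2 j k) = 2"
  by (simp add: mono2_def mdeg_mono_add mdeg_unit_mono)

lemma quad_triple_coeff_nonzero: "quad_triple Q (i,a) \<noteq> 0 \<Longrightarrow> a \<in> range (case_prod mono2)"
  by (rule ccontr) (auto simp: quad_triple_def intro!: sum.neutral)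

lemma ev_quad_triple: "ev (quad_triple Q) x $ i = (\<Sum>j\<in>UNIV. \<Sum>k\<in>UNIV. Q i j k * (x$j * x$k))"
proof -
  let ?S = "range (case_prod mono2)"
  have "ev (quad_triple Q) x $ i = (\<Sum>a\<in>?S. quad_triple Q (i,a) * mon a x)"
    by (rule ev_nth_eq_sum_superset) (use quad_triple_coeff_nonzero in auto)
  also have "\<dots> = (\<Sum>a\<in>?S. \<Sum>j\<in>UNIV. \<Sum>k\<in>UNIV. of_bool (a = mono2 j k) * (Q i j k * mon a x))"
    by (simp add: quad_triple_def sum_distrib_right mult.assoc)
  also have "\<dots> = (\<Sum>j\<in>UNIV. \<Sum>k\<in>UNIV. \<Sum>a\<in>?S. of_bool (a = mono2 j k) * (Q i j k * mon a x))"
    by (rule sum_rotate3[symmetric])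
  also have "\<dots> = (\<Sum>j\<in>UNIV. \<Sum>k\<in>UNIV. Q i j k * mon (mono2 j k) x)"
  proof (intro sum.cong refl)
    fix j k
    have "?S \<inter> {a. a = mono2 j k} = {mono2 j k}" by auto
    then show "(\<Sum>a\<in>?S. of_bool (a = mono2 j k) * (Q i j k * mon a x)) = Q i j k * mon (mono2 j k) x"
      by simp
  qed
  also have "\<dots> = (\<Sum>j\<in>UNIV. \<Sum>k\<in>UNIV. Q i j k * (x$j * x$k))"
    by (simp add: mono2_def mon_mono_add mon_unit_mono)
  finally show ?thesis .
qed

lemma is_triple_quad_triple: "ev (quad_triple Q) x0 \<noteq> 0 \<Longrightarrow> is_triple 2 (quad_triple Q)"
  unfolding is_triple_def
  using ev_nonzero_imp_coeff_nonzero quad_triple_coeff_nonzero mdeg_mono2 by fastforce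

text \<open>\<open>fmap c\<close> is \<open>f\<^sub>t\<close> with \<open>t(1 - t)\<close> replaced by \<open>c\<close>; it is written through its coefficient
  tensor so that its linear conjugates have explicit coefficients, continuous in \<open>c\<close>.\<close>

definition fcoeff :: "complex \<Rightarrow> 3 \<Rightarrow> 3 \<Rightarrow> 3 \<Rightarrow> complex" where
  "fcoeff c l p q = of_bool (p = 0 \<and> q = l) + of_bool (l = 2 \<and> p = 1 \<and> q = 1) * c"

definition fmap :: "complex \<Rightarrow> complex^3 \<Rightarrow> complex^3" where
  "fmap c y = (\<chi> l. \<Sum>p\<in>UNIV. \<Sum>q\<in>UNIV. fcoeff c l p q * (y$p * y$q))"

lemma fmap_nth:
  "fmap c y $ 0 = y$0 * y$0" "fmap c y $ 1 = y$0 * y$1" "fmap c y $ 2 = y$0 * y$2 + c * (y$1 * y$1)"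
  by (simp_all add: fmap_def fcoeff_def sum_UNIV_num3)

lemma fmap_fmap_uminus: "fmap c (fmap (-c) y) = (y$0^3) *s y"
  by (rule vec_num3_eqI) (simp_all add: fmap_nth algebra_simps power3_eq_cube)

lemma fmap_axis_0: "fmap c (axis 0 1) = axis 0 1"
  by (rule vec_num3_eqI) (simp_all add: fmap_nth axis_nth)

lemma fmap_smult: "fmap c (u *s y) = (u^2) *s fmap c y"
  by (rule vec_num3_eqI) (simp_all add: fmap_nth algebra_simps power2_eq_square)

lemma fmap_0: "fmap 0 y = (y$0) *s y"
  by (rule vec_num3_eqI) (simp_all add: fmap_nth)

definition fmap_triple :: "complex^3^3 \<Rightarrow> complex^3^3 \<Rightarrow> complex \<Rightarrow> triple" where
  "fmap_triple L R c = quad_triple (\<lambda>i j k.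
     \<Sum>l\<in>UNIV. \<Sum>p\<in>UNIV. \<Sum>q\<in>UNIV. L$i$l * fcoeff c l p q * R$p$j * R$q$k)"

lemma ev_fmap_triple: "ev (fmap_triple L R c) x = L *v fmap c (R *v x)"
proof -
  have "ev (fmap_triple L R c) x $ i = (L *v fmap c (R *v x)) $ i" for i
  proof -
    have "ev (fmap_triple L R c) x $ i = (\<Sum>j\<in>UNIV. \<Sum>k\<in>UNIV. \<Sum>l\<in>UNIV. \<Sum>p\<in>UNIV. \<Sum>q\<in>UNIV.
        L$i$l * fcoeff c l p q * R$p$j * R$q$k * (x$j * x$k))"
      by (simp add: fmap_triple_def ev_quad_triple sum_distrib_right)
    also have "\<dots> = (\<Sum>l\<in>UNIV. \<Sum>j\<in>UNIV. \<Sum>k\<in>UNIV. \<Sum>p\<in>UNIV. \<Sum>q\<in>UNIV.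
        L$i$l * fcoeff c l p q * R$p$j * R$q$k * (x$j * x$k))"
      by (rule sum_rotate3)
    also have "\<dots> = (\<Sum>l\<in>UNIV. \<Sum>p\<in>UNIV. \<Sum>q\<in>UNIV. \<Sum>j\<in>UNIV. \<Sum>k\<in>UNIV.
        L$i$l * fcoeff c l p q * R$p$j * R$q$k * (x$j * x$k))"
      by (rule sum.cong[OF refl], rule sum_swap_pairs)
    also have "\<dots> = (\<Sum>l\<in>UNIV. \<Sum>p\<in>UNIV. \<Sum>q\<in>UNIV. L$i$l * (fcoeff c l p q *
         ((\<Sum>j\<in>UNIV. R$p$j * x$j) * (\<Sum>k\<in>UNIV. R$q$k * x$k))))"
      by (intro sum.cong refl) (simp only: sum_product, simp add: sum_distrib_left mult_ac)
    also have "\<dots> = (L *v fmap c (R *v x)) $ i"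
      unfolding matrix_vector_mult_def fmap_def by (simp add: sum_distrib_left)
    finally show ?thesis .
  qed
  then show ?thesis by (simp add: vec_eq_iff)
qed

lemma is_triple_fmap_triple:
  assumes "mat_inverses L Li" "mat_inverses R Ri" shows "is_triple 2 (fmap_triple L R c)"
proof -
  have "ev (fmap_triple L R c) (Ri *v axis 0 1) \<noteq> 0"
    using assms by (simp add: ev_fmap_triple mat_inverses_apply fmap_axis_0
        mat_inverses_nonzero[OF assms(1) axis_nonzero])
  then show ?thesis unfolding fmap_triple_def by (rule is_triple_quad_triple)
qed

lemma inv_pair_fmap_triple:
  assumes L: "mat_inverses L Li" and R: "mat_inverses R Ri"
  shows "inv_pair (fmap_triple L R c) (fmap_triple Ri Li (-c))"
  unfolding inv_pair_def
proof
  have ev: "ev (fmap_triple L R c) (ev (fmap_triple Ri Li (-c)) x) = ((Li *v x)$0^3) *s x" for x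
    by (simp add: ev_fmap_triple mat_inverses_apply[OF R] fmap_fmap_uminus matrix_vector_mult_smult
        mat_inverses_apply[OF L])
  show "\<exists>x. ev (fmap_triple L R c) (ev (fmap_triple Ri Li (- c)) x) \<noteq> 0"
    by (rule exI[of _ "L *v axis 0 1"])
      (simp add: ev mat_inverses_apply[OF L] axis_nth mat_inverses_nonzero[OF L axis_nonzero])
  show "\<forall>x. par (ev (fmap_triple L R c) (ev (fmap_triple Ri Li (- c)) x)) x"
    by (simp add: ev par_smult_left par_refl)
qed

lemma proj_cls_fmap_triple_in_H:
  assumes L: "mat_inverses L Li" and R: "mat_inverses R Ri"
  shows "proj_cls (fmap_triple L R c) \<in> H 2"
  using inv_pair_fmap_triple[OF mat_inverses_sym[OF R] mat_inverses_sym[OF L], of "-c"]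
  by (intro proj_cls_in_H[OF is_triple_fmap_triple[OF L R]
        is_triple_fmap_triple[OF mat_inverses_sym[OF R] mat_inverses_sym[OF L]]
        inv_pair_fmap_triple[OF L R]]) simp

lemma bir_of_fmap_triple_in_Bir:
  "mat_inverses L Li \<Longrightarrow> mat_inverses R Ri \<Longrightarrow> bir_of (fmap_triple L R c) \<in> Bir"
  by (rule bir_of_in_Bir[OF is_triple_fmap_triple _ proj_cls_fmap_triple_in_H]) auto

lemma ex3_nth [simp]: "ex3 a b c 0 = a" "ex3 a b c 1 = b" "ex3 a b c 2 = c"
  by (simp_all add: ex3_def)

lemma ex3_eq_iff: "ex3 a b c = ex3 a' b' c' \<longleftrightarrow> a = a' \<and> b = b' \<and> c = c'"
  using mono_eq_iff[of "ex3 a b c" "ex3 a' b' c'"] by simp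

lemma ev_ftr: "ev (ftr t) y = fmap (complex_of_real (t * (1 - t))) y"
proof -
  define S where "S = {ex3 2 0 0, ex3 1 1 0, ex3 1 0 1, ex3 0 2 0}"
  have ev: "ev (ftr t) y $ i = (\<Sum>a\<in>S. ftr t (i,a) * mon a y)" for i
    by (rule ev_nth_eq_sum_superset) (auto simp: S_def ftr_def split: if_splits)
  have S: "(\<Sum>a\<in>S. g a) = g (ex3 2 0 0) + g (ex3 1 1 0) + g (ex3 1 0 1) + g (ex3 0 2 0)"
    for g :: "mono \<Rightarrow> complex"
    by (simp add: S_def ex3_eq_iff add.assoc)
  show ?thesis
    by (rule vec_num3_eqI; simp only: ev S;
        simp add: ftr_def ex3_eq_iff mon_num3 fmap_nth power2_eq_square)
qed

lemma is_triple_ftr: "is_triple 2 (ftr t)"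
  unfolding is_triple_def
proof
  have "ev (ftr t) (axis 0 1) \<noteq> 0" by (simp add: ev_ftr fmap_axis_0 axis_nonzero)
  then show "\<exists>k. ftr t k \<noteq> 0" by (rule ev_nonzero_imp_coeff_nonzero)
  show "\<forall>i a. ftr t (i, a) \<noteq> 0 \<longrightarrow> mdeg a = 2"
    by (auto simp: ftr_def mdeg_def sum_UNIV_num3 split: if_splits)
qed

lemma bir_conj_f:
  assumes X: "mat_inverses X Xi"
  shows "bir_comp (bir_lin X) (bir_comp (f t) (bir_inv (bir_lin X))) =
    bir_of (fmap_triple X Xi (complex_of_real (t * (1 - t))))"
proof -
  let ?c = "complex_of_real (t * (1 - t))"
  have I: "mat_inverses (mat 1) (mat 1)" by (rule mat_inverses_mat_1)
  have Xi: "mat_inverses Xi X" using mat_inverses_sym[OF X] .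
  have 1: "bir_comp (f t) (bir_lin Xi) = bir_of (fmap_triple (mat 1) Xi ?c)"
    unfolding f_def bir_lin_def
    by (rule bir_comp_bir_of[OF is_triple_ftr _ is_triple_lin_triple[OF Xi]
          is_triple_fmap_triple[OF I Xi]])
       (simp_all add: ev_fmap_triple ev_ftr ev_lin_triple bir_of_fmap_triple_in_Bir[OF I Xi])
  have 2: "bir_comp (bir_lin X) (bir_of (fmap_triple (mat 1) Xi ?c)) = bir_of (fmap_triple X Xi ?c)"
    unfolding bir_lin_def
    by (rule bir_comp_bir_of[OF is_triple_lin_triple[OF X] _ is_triple_fmap_triple[OF I Xi]
          is_triple_fmap_triple[OF X Xi]])
       (simp_all add: ev_fmap_triple ev_lin_triple bir_of_fmap_triple_in_Bir[OF X Xi])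
  show ?thesis using bir_inv_bir_lin[OF X] 1 2 by simp
qed

section \<open>The topology of \<open>Bir(P\<^sup>2)\<close>\<close>

lemma istopology_quot_top:
  "istopology (\<lambda>U. U \<subseteq> g ` topspace X \<and> openin X {x \<in> topspace X. g x \<in> U})"
  unfolding istopology_def
proof (rule conjI; intro allI impI)
  fix S T assume "S \<subseteq> g ` topspace X \<and> openin X {x \<in> topspace X. g x \<in> S}"
    "T \<subseteq> g ` topspace X \<and> openin X {x \<in> topspace X. g x \<in> T}"
  moreover have "{x \<in> topspace X. g x \<in> S \<inter> T} =
      {x \<in> topspace X. g x \<in> S} \<inter> {x \<in> topspace X. g x \<in> T}" by auto
  ultimately show "S \<inter> T \<subseteq> g ` topspace X \<and> openin X {x \<in> topspace X. g x \<in> S \<inter> T}" by auto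
next
  fix KK assume K: "\<forall>K\<in>KK. K \<subseteq> g ` topspace X \<and> openin X {x \<in> topspace X. g x \<in> K}"
  have "{x \<in> topspace X. g x \<in> \<Union>KK} = (\<Union>K\<in>KK. {x \<in> topspace X. g x \<in> K})" by auto
  then show "\<Union>KK \<subseteq> g ` topspace X \<and> openin X {x \<in> topspace X. g x \<in> \<Union>KK}"
    using K by auto
qed

lemma openin_quot_top:
  "openin (quot_top X g) U \<longleftrightarrow> U \<subseteq> g ` topspace X \<and> openin X {x \<in> topspace X. g x \<in> U}"
  unfolding quot_top_def topology_inverse'[OF istopology_quot_top] ..

lemma topspace_quot_top: "topspace (quot_top X g) = g ` topspace X"
proof -
  have "{x \<in> topspace X. g x \<in> g ` topspace X} = topspace X" by auto
  then have "openin (quot_top X g) (g ` topspace X)"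
    unfolding openin_quot_top by simp
  then have "g ` topspace X \<subseteq> topspace (quot_top X g)" by (rule openin_subset)
  moreover have "topspace (quot_top X g) \<subseteq> g ` topspace X"
    unfolding topspace_def openin_quot_top by auto
  ultimately show ?thesis by blast
qed

lemma istopology_bir_top:
  "istopology (\<lambda>U. U \<subseteq> Bir \<and> (\<forall>d\<ge>1. openin (Bir_le_top d) (U \<inter> Bir_le d)))"
  unfolding istopology_def
proof (rule conjI; intro allI impI)
  fix S T assume "S \<subseteq> Bir \<and> (\<forall>d\<ge>1. openin (Bir_le_top d) (S \<inter> Bir_le d))"
    "T \<subseteq> Bir \<and> (\<forall>d\<ge>1. openin (Bir_le_top d) (T \<inter> Bir_le d))"
  moreover have "S \<inter> T \<inter> Bir_le d = (S \<inter> Bir_le d) \<inter> (T \<inter> Bir_le d)" for d by auto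
  ultimately show "S \<inter> T \<subseteq> Bir \<and> (\<forall>d\<ge>1. openin (Bir_le_top d) (S \<inter> T \<inter> Bir_le d))" by auto
next
  fix KK assume K: "\<forall>K\<in>KK. K \<subseteq> Bir \<and> (\<forall>d\<ge>1. openin (Bir_le_top d) (K \<inter> Bir_le d))"
  have eq: "\<Union>KK \<inter> Bir_le d = (\<Union>K\<in>KK. K \<inter> Bir_le d)" for d by auto
  have "openin (Bir_le_top d) (\<Union>KK \<inter> Bir_le d)" if "d \<ge> 1" for d
    unfolding eq using K that by (intro openin_Union) auto
  then show "\<Union>KK \<subseteq> Bir \<and> (\<forall>d\<ge>1. openin (Bir_le_top d) (\<Union>KK \<inter> Bir_le d))"
    using K by auto
qed

lemma openin_bir_top:
  "openin bir_top U \<longleftrightarrow> U \<subseteq> Bir \<and> (\<forall>d\<ge>1. openin (Bir_le_top d) (U \<inter> Bir_le d))"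
  unfolding bir_top_def topology_inverse'[OF istopology_bir_top] ..

lemma topspace_H_top: "topspace (H_top d) = H d"
  by (auto simp: H_top_def W_top_def topspace_quot_top W_def H_def)

lemma topspace_Bir_le_top: "topspace (Bir_le_top d) = Bir_le d"
  by (simp add: Bir_le_top_def topspace_quot_top topspace_H_top Bir_le_def)

lemma Bir_le_subset_Bir: "d \<ge> 1 \<Longrightarrow> Bir_le d \<subseteq> Bir"
  by (auto simp: Bir_def)

lemma topspace_bir_top: "topspace bir_top = Bir"
proof -
  have "openin bir_top Bir"
    unfolding openin_bir_top
    using Bir_le_subset_Bir topspace_Bir_le_top by (metis inf.absorb2 openin_topspace subset_refl)
  then have "Bir \<subseteq> topspace bir_top" by (rule openin_subset)
  moreover have "topspace bir_top \<subseteq> Bir" unfolding topspace_def openin_bir_top by auto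
  ultimately show ?thesis by blast
qed

lemma openin_bir_top_pullback:
  assumes U: "openin bir_top U" and d: "d \<ge> 1"
  obtains G where "open G"
    "\<And>K. K \<in> triples d \<Longrightarrow> proj_cls K \<in> H d \<Longrightarrow> K \<in> G \<longleftrightarrow> bir_of K \<in> U"
proof -
  have "openin (Bir_le_top d) (U \<inter> Bir_le d)" using U d by (simp add: openin_bir_top)
  then have "openin (H_top d) {P \<in> H d. bir_of_cls P \<in> U \<inter> Bir_le d}"
    unfolding Bir_le_top_def openin_quot_top topspace_H_top by simp
  then obtain T where T: "openin (W_top d) T" "{P \<in> H d. bir_of_cls P \<in> U \<inter> Bir_le d} = T \<inter> H d"
    unfolding H_top_def openin_subtopology by blast
  then have "openin (top_of_set (triples d)) {K \<in> triples d. proj_cls K \<in> T}"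
    unfolding W_top_def openin_quot_top by simp
  then obtain G where G: "open G" "{K \<in> triples d. proj_cls K \<in> T} = triples d \<inter> G"
    unfolding openin_open by blast
  show ?thesis
  proof (rule that[OF G(1)])
    fix K assume K: "K \<in> triples d" "proj_cls K \<in> H d"
    have "K \<in> G \<longleftrightarrow> proj_cls K \<in> T" using G(2) K(1) by blast
    also have "\<dots> \<longleftrightarrow> proj_cls K \<in> {P \<in> H d. bir_of_cls P \<in> U \<inter> Bir_le d}" using K(2) T(2) by simp
    also have "\<dots> \<longleftrightarrow> bir_of K \<in> U"
      using K(2)
      by (auto simp: bir_of_cls_proj_cls Bir_le_def image_iff intro: bexI[of _ "proj_cls K"])
    finally show "K \<in> G \<longleftrightarrow> bir_of K \<in> U" .
  qed
qed

lemma continuous_on_coeff: "continuous_on S (\<lambda>x. fst x k :: 'b::topological_space)"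
  by (rule continuous_on_product_then_coordinatewise[OF continuous_on_fst[OF continuous_on_id]])

lemma closed_triples_par_matrix:
  assumes C: "compact C"
  shows "closed {K. \<exists>A\<in>C. \<forall>x. par (ev_deg d K x) (A *v x)}"
proof -
  let ?F = "{K. \<exists>A\<in>C. \<forall>x. par (ev_deg d K x) (A *v x)}"
  define N where "N x i j = {KA :: triple \<times> (complex^3^3).
      (ev_deg d (fst KA) x)$i * (snd KA *v x)$j \<noteq> (ev_deg d (fst KA) x)$j * (snd KA *v x)$i}"
    for x i j
  have "open (N x i j)" for x i j
    unfolding N_def ev_deg_def matrix_vector_mult_def
    by (intro open_Collect_neq) (simp, intro continuous_intros continuous_on_coeff)+
  then have W: "open (\<Union>x. \<Union>i. \<Union>j. N x i j)" by (intro open_UN ballI)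
  have "open (- ?F)"
  proof (subst open_subopen, intro ballI)
    fix K assume "K \<in> - ?F"
    then have "{K} \<times> C \<subseteq> (\<Union>x. \<Union>i. \<Union>j. N x i j)" by (auto simp: N_def par_def)
    then obtain X0 where X0: "K \<in> X0" "open X0" "X0 \<times> C \<subseteq> (\<Union>x. \<Union>i. \<Union>j. N x i j)"
      using Elementary_Topology.tube_lemma[OF C W] by blast
    have "X0 \<subseteq> - ?F" using X0(3) by (fastforce simp: N_def par_def)
    then show "\<exists>T. open T \<and> K \<in> T \<and> T \<subseteq> - ?F" using X0 by blast
  qed
  then show ?thesis by (simp add: closed_def)
qed

lemma bir_lin_image_iff:
  assumes C: "C \<subseteq> unitary3" and K: "K \<in> triples d"
  shows "proj_cls K \<in> H d \<and> bir_of K \<in> bir_lin ` C \<longleftrightarrow> (\<exists>A\<in>C. \<forall>x. par (ev_deg d K x) (A *v x))"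
proof
  have Kt: "is_triple d K" using K by (simp add: triples_def)
  {
    assume "proj_cls K \<in> H d \<and> bir_of K \<in> bir_lin ` C"
    then obtain A where A: "A \<in> C" "bir_of K = bir_lin A" by auto
    have "K \<in> bir_of (lin_triple A)" using bir_of_self[OF Kt] A(2) by (simp add: bir_lin_def)
    then have "par (A *v x) (ev K x)" for x by (auto simp: bir_of_def ev_lin_triple)
    then show "\<exists>A\<in>C. \<forall>x. par (ev_deg d K x) (A *v x)" using A(1) ev_deg_eq_ev[OF Kt] par_sym
      by metis
  }
  assume "\<exists>A\<in>C. \<forall>x. par (ev_deg d K x) (A *v x)"
  then obtain A where A: "A \<in> C" "\<And>x. par (ev_deg d K x) (A *v x)" by blast
  have Ai: "mat_inverses A (cstar A)" using A(1) C unitary3_inverses by auto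
  have par: "par (ev K x) (A *v x)" for x using A(2) ev_deg_eq_ev[OF Kt] by metis
  obtain y where y: "ev K y \<noteq> 0" using ex_ev_nonzero[OF Kt] by blast
  have "inv_pair K (lin_triple (cstar A))"
    unfolding inv_pair_def ev_lin_triple
  proof
    show "\<exists>x. ev K (cstar A *v x) \<noteq> 0"
      using y by (intro exI[of _ "A *v y"]) (simp add: mat_inverses_apply[OF Ai])
    show "\<forall>x. par (ev K (cstar A *v x)) x"
      using par[of "cstar A *v _"] by (simp add: mat_inverses_apply[OF Ai])
  qed
  moreover have "inv_pair (lin_triple (cstar A)) K"
    unfolding inv_pair_def ev_lin_triple
  proof
    show "\<exists>x. cstar A *v ev K x \<noteq> 0" using y mat_inverses_nonzero[OF mat_inverses_sym[OF Ai] y]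
      by blast
    show "\<forall>x. par (cstar A *v ev K x) x"
      using par_matrix_vector_mult[OF par, of "cstar A"] by (simp add: mat_inverses_apply[OF Ai])
  qed
  ultimately have "proj_cls K \<in> H d"
    by (rule proj_cls_in_H[OF Kt is_triple_lin_triple[OF mat_inverses_sym[OF Ai]]])
  moreover have "bir_of K = bir_lin A"
    unfolding bir_lin_def by (rule bir_of_eq_if_par[OF Kt is_triple_lin_triple[OF Ai]])
      (simp add: ev_lin_triple par)
  ultimately show "proj_cls K \<in> H d \<and> bir_of K \<in> bir_lin ` C" using A(1) by auto
qed

lemma closedin_bir_lin_image:
  assumes C: "compact C" "C \<subseteq> unitary3"
  shows "closedin bir_top (bir_lin ` C)"
proof -
  have "openin bir_top (Bir - bir_lin ` C)"
    unfolding openin_bir_top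
  proof (intro conjI allI impI)
    show "Bir - bir_lin ` C \<subseteq> Bir" by auto
    fix d :: nat assume d: "d \<ge> 1"
    let ?T = "W d - {P \<in> H d. bir_of_cls P \<in> bir_lin ` C}"
    have "{K \<in> triples d. proj_cls K \<in> ?T} = triples d - {K. \<exists>A\<in>C. \<forall>x. par (ev_deg d K x) (A *v x)}"
      using bir_lin_image_iff[OF C(2)] by (auto simp: bir_of_cls_proj_cls W_def)
    then have "openin (top_of_set (triples d)) {K \<in> triples d. proj_cls K \<in> ?T}"
      using closed_triples_par_matrix[OF C(1), of d] by (auto simp: openin_open closed_def Diff_eq)
    then have T: "openin (W_top d) ?T"
      unfolding W_top_def openin_quot_top by (auto simp: W_def)
    have "{P \<in> H d. bir_of_cls P \<in> (Bir - bir_lin ` C) \<inter> Bir_le d} = ?T \<inter> H d"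
      using Bir_le_subset_Bir[OF d] by (auto simp: Bir_le_def H_def)
    then have "openin (H_top d) {P \<in> H d. bir_of_cls P \<in> (Bir - bir_lin ` C) \<inter> Bir_le d}"
      unfolding H_top_def openin_subtopology using T by blast
    then show "openin (Bir_le_top d) ((Bir - bir_lin ` C) \<inter> Bir_le d)"
      unfolding Bir_le_top_def openin_quot_top topspace_H_top by (auto simp: Bir_le_def)
  qed
  moreover have "bir_lin ` C \<subseteq> Bir" using C(2) bir_lin_in_Bir unitary3_inverses by blast
  ultimately show ?thesis by (simp add: closedin_def topspace_bir_top)
qed

section \<open>Continuity of unitary conjugates of \<open>f\<^sub>t\<close>\<close>

definition conj_fmap :: "complex^3^3 \<Rightarrow> real \<Rightarrow> triple set" where
  "conj_fmap X c = bir_of (fmap_triple X (cstar X) (complex_of_real c))"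

lemma conj_fmap_in_Bir: "X \<in> unitary3 \<Longrightarrow> conj_fmap X c \<in> Bir"
  unfolding conj_fmap_def
  using bir_of_fmap_triple_in_Bir unitary3_inverses mat_inverses_sym by blast

lemma bir_conj_f_unitary3:
  "X \<in> unitary3 \<Longrightarrow>
    bir_comp (bir_lin X) (bir_comp (f t) (bir_inv (bir_lin X))) = conj_fmap X (t * (1 - t))"
  unfolding conj_fmap_def by (rule bir_conj_f[OF unitary3_inverses])

lemma conj_fmap_mat_1: "conj_fmap (mat 1) (t * (1 - t)) = f t"
  unfolding conj_fmap_def f_def cstar_mat_1
  by (rule bir_of_eq_if_ev_multiple[of _ 1]) (simp_all add: ev_fmap_triple ev_ftr)

lemma conj_fmap_0:
  assumes "X \<in> unitary3" shows "conj_fmap X 0 = bir_id"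
proof -
  have X: "mat_inverses X (cstar X)" using unitary3_inverses[OF assms] .
  show ?thesis
    unfolding conj_fmap_def bir_id_def
    by (rule bir_of_eq_if_par[OF is_triple_fmap_triple[OF X mat_inverses_sym[OF X]]
          is_triple_lin_triple[OF mat_inverses_mat_1]])
      (simp add: ev_fmap_triple ev_lin_triple fmap_0 matrix_vector_mult_smult
        mat_inverses_apply[OF X] par_smult_left par_refl)
qed

lemma conj_fmap_scale_mat:
  assumes u: "u * cnj u = 1"
  shows "conj_fmap (scale_mat u X) c = conj_fmap X c"
  unfolding conj_fmap_def
proof (rule bir_of_eq_if_ev_multiple)
  have "u * (cnj u)^2 = cnj u" using u by (simp add: power2_eq_square mult.assoc[symmetric])
  then show "ev (fmap_triple (scale_mat u X) (cstar (scale_mat u X)) (complex_of_real c)) x =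
      cnj u *s ev (fmap_triple X (cstar X) (complex_of_real c)) x" for x
    by (simp add: ev_fmap_triple cstar_scale_mat scale_mat_matrix_vector_mult fmap_smult
        matrix_vector_mult_smult vector_smult_assoc mult.commute)
  show "cnj u \<noteq> 0" using u by auto
qed

lemma continuous_on_fmap_triple:
  "continuous_on UNIV
     (\<lambda>p :: real \<times> (complex^3^3). fmap_triple (snd p) (cstar (snd p)) (complex_of_real (fst p)))"
proof (rule continuous_on_coordinatewise_then_product)
  fix k :: "3 \<times> mono"
  obtain i a where k: "k = (i,a)" by (cases k)
  show "continuous_on UNIV
      (\<lambda>p :: real \<times> (complex^3^3). fmap_triple (snd p) (cstar (snd p)) (complex_of_real (fst p)) k)"
    unfolding k fmap_triple_def quad_triple_def fcoeff_def cstar_def prod.case vec_lambda_beta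
    by (intro continuous_intros)
qed

lemma open_conj_fmap_preimage:
  assumes "openin bir_top U"
  obtains T where "open T" "\<And>c X. X \<in> unitary3 \<Longrightarrow> (c, X) \<in> T \<longleftrightarrow> conj_fmap X c \<in> U"
proof -
  obtain G where G: "open G"
    "\<And>K. K \<in> triples 2 \<Longrightarrow> proj_cls K \<in> H 2 \<Longrightarrow> K \<in> G \<longleftrightarrow> bir_of K \<in> U"
    using openin_bir_top_pullback[OF assms, of 2] by auto
  let ?\<Gamma> =
    "\<lambda>p :: real \<times> (complex^3^3). fmap_triple (snd p) (cstar (snd p)) (complex_of_real (fst p))"
  show ?thesis
  proof (rule that)
    show "open (?\<Gamma> -` G)"
      using continuous_open_preimage[OF continuous_on_fmap_triple open_UNIV G(1)] by simp
    fix c X assume "X \<in> unitary3"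
    then have X: "mat_inverses X (cstar X)" by (rule unitary3_inverses)
    show "(c, X) \<in> ?\<Gamma> -` G \<longleftrightarrow> conj_fmap X c \<in> U"
      using G(2) is_triple_fmap_triple[OF X mat_inverses_sym[OF X]]
        proj_cls_fmap_triple_in_H[OF X mat_inverses_sym[OF X]]
      by (simp add: conj_fmap_def triples_def)
  qed
qed

lemma conj_fmap_near_bir_id:
  assumes U: "openin bir_top U" "bir_id \<in> U"
  obtains \<delta> where "\<delta> > 0" "\<And>c X. \<bar>c\<bar> < \<delta> \<Longrightarrow> X \<in> unitary3 \<Longrightarrow> conj_fmap X c \<in> U"
proof -
  obtain T where T: "open T" "\<And>c X. X \<in> unitary3 \<Longrightarrow> (c, X) \<in> T \<longleftrightarrow> conj_fmap X c \<in> U"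
    using open_conj_fmap_preimage[OF U(1)] by blast
  have "{0} \<times> unitary3 \<subseteq> T" using T(2) conj_fmap_0 U(2) by auto
  then obtain R where R: "0 \<in> R" "open R" "R \<times> unitary3 \<subseteq> T"
    using Elementary_Topology.tube_lemma[OF compact_unitary3 T(1)] by blast
  obtain \<delta> where \<delta>: "\<delta> > 0" "ball 0 \<delta> \<subseteq> R" using R(1,2) open_contains_ball by blast
  show ?thesis
  proof (rule that[OF \<delta>(1)])
    fix c X assume c: "\<bar>c\<bar> < \<delta>" and X: "X \<in> unitary3"
    then have "(c, X) \<in> T" using \<delta>(2) R(3) by (auto simp: subset_eq dist_real_def)
    then show "conj_fmap X c \<in> U" using T(2)[OF X] by blast
  qed
qed

text \<open>The complement in \<open>U(3)\<close> of the unit-scalar saturation of \<open>N\<close> is compact, so its image is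
  closed in \<open>Bir(P\<^sup>2)\<close> and \<open>\<sigma>\<close> avoids it near \<open>y0\<close>.\<close>

lemma bir_lin_lift_locally:
  assumes cont: "continuous_map Y bir_top \<sigma>"
    and lift: "\<And>y. y \<in> topspace Y \<Longrightarrow> A y \<in> unitary3 \<and> \<sigma> y = bir_lin (A y)"
    and y0: "y0 \<in> topspace Y" and N: "open N" "A y0 \<in> N"
  obtains V where "openin Y V" "y0 \<in> V" "\<And>y. y \<in> V \<Longrightarrow> \<exists>u. u * cnj u = 1 \<and> scale_mat u (A y) \<in> N"
proof -
  define N' where "N' = {B. \<exists>u. u * cnj u = 1 \<and> scale_mat u B \<in> N}"
  have "N' = (\<Union>u\<in>{u. u * cnj u = 1}. scale_mat u -` N)" unfolding N'_def by auto
  then have "open N'"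
    using continuous_open_preimage[OF continuous_on_scale_mat open_UNIV N(1)] by auto
  then have C: "compact (unitary3 - N')" "unitary3 - N' \<subseteq> unitary3"
    using compact_diff[OF compact_unitary3] by auto
  define V where "V = {y \<in> topspace Y. \<sigma> y \<in> Bir - bir_lin ` (unitary3 - N')}"
  show ?thesis
  proof (rule that)
    show "openin Y V"
      unfolding V_def using closedin_bir_lin_image[OF C] cont
      by (intro openin_continuous_map_preimage) (auto simp: closedin_def topspace_bir_top)
    have A0: "A y0 \<in> unitary3" "\<sigma> y0 = bir_lin (A y0)" using lift[OF y0] by auto
    have "A' \<in> N'" if A': "A' \<in> unitary3" "bir_lin (A y0) = bir_lin A'" for A'
    proof -
      obtain l where l: "l * cnj l = 1" "A' = scale_mat l (A y0)"
        using bir_lin_eq_unitary3[OF A0(1) A'] .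
      then have "scale_mat (cnj l) A' = A y0"
        by (simp add: scale_mat_scale_mat mult.commute scale_mat_1)
      moreover have "cnj l * cnj (cnj l) = 1" using l(1) by (simp add: mult.commute)
      ultimately show "A' \<in> N'" using N(2) unfolding N'_def
        by (intro CollectI exI[of _ "cnj l"]) simp
    qed
    then have "\<sigma> y0 \<notin> bir_lin ` (unitary3 - N')" using A0(2) by blast
    moreover have "\<sigma> y0 \<in> Bir" using A0 bir_lin_in_Bir[OF unitary3_inverses] by simp
    ultimately show "y0 \<in> V" using y0 unfolding V_def by blast
    fix y assume y: "y \<in> V"
    then have "A y \<in> unitary3" "\<sigma> y = bir_lin (A y)" using lift unfolding V_def by auto
    then have "A y \<in> N'" using y unfolding V_def by blast
    then show "\<exists>u. u * cnj u = 1 \<and> scale_mat u (A y) \<in> N" unfolding N'_def by blast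
  qed
qed

lemma continuous_map_conj_fmap:
  assumes cont: "continuous_map Y bir_top \<sigma>"
    and lift: "\<And>y. y \<in> topspace Y \<Longrightarrow> A y \<in> unitary3 \<and> \<sigma> y = bir_lin (A y)"
    and M: "M \<in> unitary3" and c: "continuous_map Y euclideanreal c"
  shows "continuous_map Y bir_top (\<lambda>y. conj_fmap (M ** A y) (c y))"
  unfolding continuous_map
proof (intro conjI allI impI)
  have MA: "M ** A y \<in> unitary3" if "y \<in> topspace Y" for y using unitary3_mult[OF M] lift[OF that]
    by blast
  then show "(\<lambda>y. conj_fmap (M ** A y) (c y)) ` topspace Y \<subseteq> topspace bir_top"
    by (auto simp: topspace_bir_top conj_fmap_in_Bir)
  fix U assume "openin bir_top U"
  then obtain T where T: "open T" "\<And>c X. X \<in> unitary3 \<Longrightarrow> (c, X) \<in> T \<longleftrightarrow> conj_fmap X c \<in> U"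
    using open_conj_fmap_preimage by blast
  show "openin Y {y \<in> topspace Y. conj_fmap (M ** A y) (c y) \<in> U}"
  proof (subst openin_subopen, intro ballI)
    fix y0 assume "y0 \<in> {y \<in> topspace Y. conj_fmap (M ** A y) (c y) \<in> U}"
    then have y0: "y0 \<in> topspace Y" "(c y0, M ** A y0) \<in> T" using T(2) MA by auto
    then obtain R N where RN: "open R" "open N" "c y0 \<in> R" "M ** A y0 \<in> N" "R \<times> N \<subseteq> T"
      using open_prod_elim[OF T(1)] by (metis mem_Sigma_iff)
    have "continuous_on UNIV (\<lambda>B::complex^3^3. M ** B)"
      unfolding matrix_matrix_mult_def by (intro continuous_intros)
    then have "open ((\<lambda>B. M ** B) -` N)"
      using continuous_open_preimage[OF _ open_UNIV RN(2)] by simp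
    then obtain V where V: "openin Y V" "y0 \<in> V"
      "\<And>y. y \<in> V \<Longrightarrow> \<exists>u. u * cnj u = 1 \<and> M ** scale_mat u (A y) \<in> N"
      using bir_lin_lift_locally[OF cont lift y0(1), of "(\<lambda>B. M ** B) -` N"] RN(4) by auto
    let ?W = "V \<inter> {y \<in> topspace Y. c y \<in> R}"
    have "conj_fmap (M ** A y) (c y) \<in> U" if y: "y \<in> ?W" for y
    proof -
      obtain u where u: "u * cnj u = 1" "scale_mat u (M ** A y) \<in> N"
        using V(3) y by (auto simp: matrix_mult_scale_mat_right)
      have "(c y, scale_mat u (M ** A y)) \<in> T" using RN(5) u(2) y by auto
      then have "conj_fmap (scale_mat u (M ** A y)) (c y) \<in> U"
        using T(2) unitary3_scale_mat[OF MA u(1)] y openin_subset[OF V(1)] by blast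
      then show ?thesis using conj_fmap_scale_mat[OF u(1)] by simp
    qed
    moreover have "openin Y ?W"
      using V(1) openin_continuous_map_preimage[OF c] RN(1) by (intro openin_Int) auto
    ultimately show "\<exists>W. openin Y W \<and> y0 \<in> W \<and> W \<subseteq> {y \<in> topspace Y. conj_fmap (M ** A y) (c y) \<in> U}"
      using V(2) y0 RN(3) openin_subset[OF V(1)] by blast
  qed
qed

lemma continuous_map_conj_square_punctured:
  assumes cont: "continuous_map (top_of_set {-1..1}) bir_top \<sigma>"
    and lift: "\<And>y. y \<in> {-1..1} \<Longrightarrow> A y \<in> unitary3 \<and> \<sigma> y = bir_lin (A y)"
    and M: "M \<in> unitary3"
  shows "continuous_map (top_of_set ({0..1} \<times> {0..1} - {(0, 0)})) bir_top
    (\<lambda>(s, t). conj_fmap (M ** A (sin (1 / max s t))) (t * (1 - t)))"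
  unfolding case_prod_unfold
proof (rule continuous_map_conj_fmap[where A = "\<lambda>q. A (sin (1 / max (fst q) (snd q)))", OF _ _ M])
  let ?P = "{0..1::real} \<times> {0..1::real} - {(0, 0)}"
  let ?y = "\<lambda>q::real \<times> real. sin (1 / max (fst q) (snd q))"
  have "continuous_on ?P ?y"
    by (intro continuous_intros) (auto simp: max_def)
  then have "continuous_map (top_of_set ?P) (top_of_set {-1..1}) ?y"
    by (auto simp: continuous_map_in_subtopology sin_ge_minus_one sin_le_one)
  then show "continuous_map (top_of_set ?P) bir_top (\<sigma> \<circ> ?y)"
    using cont by (rule continuous_map_compose)
  show "A (?y q) \<in> unitary3 \<and> (\<sigma> \<circ> ?y) q = bir_lin (A (?y q))" for q
    using lift by (simp add: sin_ge_minus_one sin_le_one)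
  show "continuous_map (top_of_set ?P) euclideanreal (\<lambda>q. snd q * (1 - snd q))"
    unfolding continuous_map_iff_continuous by (intro continuous_intros)
qed

lemma continuous_map_conj_square:
  fixes F :: "real \<times> real \<Rightarrow> triple set"
  assumes cont: "continuous_map (top_of_set {-1..1}) bir_top \<sigma>"
    and lift: "\<And>y. y \<in> {-1..1} \<Longrightarrow> A y \<in> unitary3 \<and> \<sigma> y = bir_lin (A y)"
    and M: "M \<in> unitary3"
    and F: "\<And>s t. (s, t) \<in> {0..1} \<times> {0..1} - {(0, 0)} \<Longrightarrow>
      F (s, t) = conj_fmap (M ** A (sin (1 / max s t))) (t * (1 - t))"
    and F0: "F (0, 0) = bir_id"
  shows "continuous_map (top_of_set ({0..1} \<times> {0..1})) bir_top F"
proof (rule continuous_map_extend_at_point)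
  let ?D = "{0..1::real} \<times> {0..1::real}"
  have "continuous_map (top_of_set (?D - {(0, 0)})) bir_top F"
  proof (rule continuous_map_eq[OF continuous_map_conj_square_punctured[OF cont lift M]])
    fix q assume "q \<in> topspace (top_of_set (?D - {(0, 0)}))"
    then show "(case q of (s, t) \<Rightarrow> conj_fmap (M ** A (sin (1 / max s t))) (t * (1 - t))) = F q"
      using F[of "fst q" "snd q"] by (simp add: case_prod_beta)
  qed
  moreover have "subtopology (top_of_set ?D) (topspace (top_of_set ?D) - {(0, 0)}) =
      top_of_set (?D - {(0, 0)})"
    by (simp add: subtopology_subtopology Int_absorb1 Diff_subset)
  ultimately show
    "continuous_map (subtopology (top_of_set ?D) (topspace (top_of_set ?D) - {(0, 0)})) bir_top F"
    by simp
  show "openin (top_of_set ?D) (topspace (top_of_set ?D) - {(0, 0)})"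
    by (simp add: openin_delete)
  show "F (0, 0) \<in> topspace bir_top"
    using F0 bir_lin_in_Bir[OF mat_inverses_mat_1] by (simp add: bir_id_eq_bir_lin topspace_bir_top)
  fix U assume U: "openin bir_top U" "F (0, 0) \<in> U"
  obtain \<delta> where \<delta>: "\<delta> > 0" "\<And>c X. \<bar>c\<bar> < \<delta> \<Longrightarrow> X \<in> unitary3 \<Longrightarrow> conj_fmap X c \<in> U"
    using conj_fmap_near_bir_id[OF U(1)] U(2) unfolding F0 by blast
  have "F (s, t) \<in> U" if st: "(s, t) \<in> ?D" "t < \<delta>" for s t
  proof (cases "(s, t) = (0, 0)")
    case False
    have "0 \<le> t * (1 - t)" using st(1) by simp
    moreover have "t * (1 - t) \<le> t" using st(1) by (intro mult_left_le) auto
    ultimately have "\<bar>t * (1 - t)\<bar> < \<delta>" using st(2) by linarith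
    moreover have "M ** A (sin (1 / max s t)) \<in> unitary3"
      using unitary3_mult[OF M] lift sin_ge_minus_one sin_le_one by simp
    ultimately show ?thesis using \<delta>(2) F st(1) False by simp
  qed (use U(2) in simp)
  moreover have "openin (top_of_set ?D) (?D \<inter> {q. snd q < \<delta>})"
    by (intro openin_open_Int open_Collect_less continuous_intros)
  ultimately show "\<exists>V. openin (top_of_set ?D) V \<and> (0, 0) \<in> V \<and> (\<forall>q\<in>V. F q \<in> U)"
    using \<delta>(1) by (intro exI[of _ "?D \<inter> {q. snd q < \<delta>}"]) auto
qed

theorem lemma5p2:
  fixes \<sigma> :: "real \<Rightarrow> triple set"
  assumes cont: "continuous_map (top_of_set {-1..1}) bir_top \<sigma>"
    and surj: "\<sigma> ` {-1..1} = PSU3"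
  defines "\<sigma>h \<equiv> \<lambda>t. bir_comp (bir_inv (\<sigma> (sin 1))) (\<sigma> (sin (1 / t)))"
    and "\<rho> \<equiv> \<lambda>t. let g = bir_comp (bir_inv (\<sigma> (sin 1))) (\<sigma> (sin (1 / t)))
                    in bir_comp g (bir_comp (f t) (bir_inv g))"
  shows "\<exists>\<rho>h. continuous_map (top_of_set {0..1}) bir_top \<rho>h
            \<and> (\<forall>t\<in>{0<..1}. \<rho>h t = \<rho> t)
            \<and> \<rho>h 0 = bir_id
            \<and> continuous_map (top_of_set ({0..1} \<times> {0..1})) bir_top
                (\<lambda>(s, t). if t \<ge> s then \<rho>h t
                          else bir_comp (\<sigma>h s) (bir_comp (f t) (bir_inv (\<sigma>h s))))
            \<and> homotopic_with (\<lambda>_. True) (top_of_set {0..1}) bir_top \<rho>h f"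
proof -
  obtain A where A: "\<And>y. y \<in> {-1..1} \<Longrightarrow> A y \<in> unitary3 \<and> \<sigma> y = bir_lin (A y)"
    using PSU3_lift[OF surj] by blast
  have sin: "sin x \<in> {-1..1}" for x :: real by (simp add: sin_ge_minus_one sin_le_one)
  define M where "M = cstar (A (sin 1))"
  have M: "M \<in> unitary3" unfolding M_def using A[OF sin] unitary3_cstar by blast
  have conj: "bir_comp (\<sigma>h s) (bir_comp (f t) (bir_inv (\<sigma>h s))) =
      conj_fmap (M ** A (sin (1 / s))) (t * (1 - t))" for s t
    using A[OF sin] bir_comp_bir_inv_bir_lin bir_conj_f_unitary3 unitary3_mult[OF M]
    by (simp add: \<sigma>h_def M_def)
  define \<rho>h where "\<rho>h t = (if t = 0 then bir_id else \<rho> t)" for t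
  define F where "F = (\<lambda>(s, t). if t \<ge> s then \<rho>h t
                          else bir_comp (\<sigma>h s) (bir_comp (f t) (bir_inv (\<sigma>h s))))"
  have F: "F (s, t) = conj_fmap (M ** A (sin (1 / max s t))) (t * (1 - t))"
    if "(s, t) \<in> {0..1} \<times> {0..1} - {(0, 0)}" for s t
    using that conj[of t t] conj[of s t] by (auto simp: F_def \<rho>h_def \<rho>_def \<sigma>h_def Let_def max_def)
  have F_cont: "continuous_map (top_of_set ({0..1} \<times> {0..1})) bir_top F"
    by (rule continuous_map_conj_square[OF cont A M F]) (simp_all add: F_def \<rho>h_def)
  have "F (1, t) = f t" if "t \<in> {0..1}" for t
    using F[of 1 t] that unitary3_cstar_mult[of "A (sin 1)"] A[OF sin]
    by (simp add: M_def conj_fmap_mat_1)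
  then have hom: "homotopic_with (\<lambda>_. True) (top_of_set {0..1}) bir_top \<rho>h f"
    by (intro homotopic_with_square[OF F_cont]) (auto simp: F_def)
  show ?thesis
    using homotopic_with_imp_continuous_maps[OF hom] F_cont hom
    by (intro exI[of _ \<rho>h]) (simp add: \<rho>h_def F_def)
qed

end
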